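(* There exist a smooth $4$-dimensional Riemannian manifold $(M^4,g)$ and a compact subset $K\subset M^4$ such that $M^4$ is diffeomorphic to an open subset of $\mathbb{R}^4$, and $(M^4\setminus K,g)$ is isometric to the annulus $A_{e^{200},\infty}=\{y\in C(\mathbb{S}^3/Q_8): d(o,y)>e^{200}\}$ in the metric cone $C(\mathbb{S}^3/Q_8)$ with vertex $o$, where the metric on $\mathbb{S}^3/Q_8$ is a constant rescaling of the standard round metric.
   Context: $Q_8=\{\pm1,\pm i,\pm j,\pm k\}$ is the quaternion group acting freely on the unit sphere $\mathbb{S}^3\subset\mathbb{H}$ by left multiplication; the round metric descends to $\mathbb{S}^3/Q_8$. For a metric space $(Y,d_Y)$, $C(Y)$ is the metric cone over $Y$ (metric $dr^2+r^2d_Y^2$ on $(0,\infty)\times Y$ with the vertex $o$ added). *)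

theory Defs
  imports "HOL-Analysis.Analysis"
begin

text \<open>C-infinity smoothness of a real-valued function on a set (meant for open sets):
  differentiable at every point, and all first partial derivatives (in the directions
  of the standard basis) are again smooth (greatest fixed point).\<close>
coinductive smooth_fun :: "'a::euclidean_space set \<Rightarrow> ('a \<Rightarrow> real) \<Rightarrow> bool" for U where
  "\<lbrakk> \<forall>x\<in>U. f differentiable (at x);
     \<forall>b\<in>Basis. smooth_fun U (\<lambda>x. frechet_derivative f (at x) b) \<rbrakk> \<Longrightarrow> smooth_fun U f"

definition smooth_map4 :: "(real^4) set \<Rightarrow> (real^4 \<Rightarrow> real^4) \<Rightarrow> bool" where
  "smooth_map4 U F \<longleftrightarrow> (\<forall>i. smooth_fun U (\<lambda>x. F x $ i))"

text \<open>A smooth Riemannian metric on an open set U of R^4, given as a field of matrices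
  g x, with g_x(v,w) = v \<bullet> (g x *v w).\<close>
definition riem_metric4 :: "(real^4) set \<Rightarrow> (real^4 \<Rightarrow> real^4^4) \<Rightarrow> bool" where
  "riem_metric4 U g \<longleftrightarrow>
     (\<forall>i j. smooth_fun U (\<lambda>x. g x $ i $ j)) \<and>
     (\<forall>x\<in>U. transpose (g x) = g x \<and> (\<forall>v. v \<noteq> 0 \<longrightarrow> v \<bullet> (g x *v v) > 0))"

definition metric_apply :: "real^4^4 \<Rightarrow> real^4 \<Rightarrow> real^4 \<Rightarrow> real" where
  "metric_apply G v w = v \<bullet> (G *v w)"

text \<open>Quaternion (Hamilton) product on R^4 = H, x = x1 + x2 i + x3 j + x4 k.\<close>
definition hmul :: "real^4 \<Rightarrow> real^4 \<Rightarrow> real^4" where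
  "hmul q x = vector
     [ q$1*x$1 - q$2*x$2 - q$3*x$3 - q$4*x$4,
       q$1*x$2 + q$2*x$1 + q$3*x$4 - q$4*x$3,
       q$1*x$3 - q$2*x$4 + q$3*x$1 + q$4*x$2,
       q$1*x$4 + q$2*x$3 - q$3*x$2 + q$4*x$1 ]"

text \<open>The quaternion group Q8 = {+-1, +-i, +-j, +-k} as a subset of R^4 = H.\<close>
definition Q8 :: "(real^4) set" where
  "Q8 = {vector [1,0,0,0], vector [-1,0,0,0], vector [0,1,0,0], vector [0,-1,0,0],
         vector [0,0,1,0], vector [0,0,-1,0], vector [0,0,0,1], vector [0,0,0,-1]}"

text \<open>Metric of the cone C(S^3, c^2 g_round) = dr^2 + r^2 c^2 g_round, written in Euclidean
  coordinates on R^4 - {0} (r = norm x): radial part plus c^2 times the tangential part.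
  Q8 acts isometrically on it, and its quotient by Q8 is C(S^3/Q8, c^2 g_round) minus the
  vertex; the distance to the vertex of the class of x is norm x.\<close>
definition cone_metric :: "real \<Rightarrow> real^4 \<Rightarrow> real^4 \<Rightarrow> real^4 \<Rightarrow> real" where
  "cone_metric c x v w =
     (x \<bullet> v) * (x \<bullet> w) / (norm x)^2 + c^2 * (v \<bullet> w - (x \<bullet> v) * (x \<bullet> w) / (norm x)^2)"

end

theory Submission
  imports Defs
begin

text \<open>Identify R^4 with the quaternions. A quaternion x acts on the traceless symmetric 3 x 3
  matrices by conjugation with the rotation it covers; let it act on the diagonal matrix whose
  spectrum ev(|x|^2) runs along the circle of spectra of Frobenius norm sqrt 2. This gives a point
  Psi x of the unit 4-sphere of such matrices. As the three eigenvalues are distinct, Psi x = Psi y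
  forces the two rotations to differ by a diagonal one, i.e. y = q x with q in Q8, the preimage of
  the diagonal sign matrices among the unit quaternions; injectivity of ev2 forces |x| = |y|.
  Stereographic projection from the one point that Psi never reaches turns Psi into a map Phi from
  the annulus to R^4 whose fibres are exactly the Q8-orbits and which is an immersion, so Phi embeds
  the annulus modulo Q8 as an open set U of R^4. The Euclidean metric is the cone metric over the
  round S^3 (so c = 1), and pushing it forward along Phi gives the metric g on U; K can be taken
  empty.\<close>

section \<open>Smooth functions\<close>

lemma smooth_fun_differentiable: "smooth_fun U f \<Longrightarrow> x \<in> U \<Longrightarrow> f differentiable (at x)"
  by (auto elim: smooth_fun.cases)

lemma smooth_fun_partial:
  "smooth_fun U f \<Longrightarrow> b \<in> Basis \<Longrightarrow> smooth_fun U (\<lambda>x. frechet_derivative f (at x) b)"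
  by (auto elim: smooth_fun.cases)

lemma smooth_fun_has_derivative:
  "smooth_fun U f \<Longrightarrow> x \<in> U \<Longrightarrow> (f has_derivative frechet_derivative f (at x)) (at x)"
  using smooth_fun_differentiable frechet_derivative_works by blast

lemma smooth_fun_coinduct:
  assumes "X f"
    and "\<And>f. X f \<Longrightarrow>
      (\<forall>x\<in>U. f differentiable (at x)) \<and> (\<forall>b\<in>Basis. X (\<lambda>x. frechet_derivative f (at x) b))"
  shows "smooth_fun U f"
  using assms(1) by (rule smooth_fun.coinduct) (use assms(2) in blast)

lemma smooth_fun_coinduct_open:
  assumes U: "open U" and "P f" and "\<forall>x\<in>U. g x = f x"
    and diff: "\<And>f x. P f \<Longrightarrow> x \<in> U \<Longrightarrow> f differentiable (at x)"
    and partial: "\<And>f b. P f \<Longrightarrow> b \<in> Basis \<Longrightarrow>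
      \<exists>f'. P f' \<and> (\<forall>x\<in>U. frechet_derivative f (at x) b = f' x)"
  shows "smooth_fun U g"
proof (rule smooth_fun_coinduct[where X = "\<lambda>g. \<exists>f. P f \<and> (\<forall>x\<in>U. g x = f x)"])
  show "\<exists>f. P f \<and> (\<forall>x\<in>U. g x = f x)" using assms(2,3) by blast
next
  fix g assume "\<exists>f. P f \<and> (\<forall>x\<in>U. g x = f x)"
  then obtain f where f: "P f" "\<forall>x\<in>U. g x = f x" by blast
  have "(g has_derivative frechet_derivative f (at x)) (at x)" if "x \<in> U" for x
    by (rule has_derivative_transform_within_open[OF _ U that])
      (use f(2) diff[OF f(1) that, unfolded frechet_derivative_works] in auto)
  then have dg: "frechet_derivative g (at x) = frechet_derivative f (at x)"
    and "g differentiable (at x)" if "x \<in> U" for x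
    using that by (metis frechet_derivative_at differentiable_def)+
  moreover have "\<exists>f'. P f' \<and> (\<forall>x\<in>U. frechet_derivative g (at x) b = f' x)" if "b \<in> Basis" for b
    using partial[OF f(1) that] dg by auto
  ultimately show "(\<forall>x\<in>U. g differentiable (at x)) \<and>
      (\<forall>b\<in>Basis. \<exists>f. P f \<and> (\<forall>x\<in>U. frechet_derivative g (at x) b = f x))"
    by blast
qed

lemma smooth_fun_cong:
  assumes "open U" "smooth_fun U f" "\<And>x. x \<in> U \<Longrightarrow> g x = f x"
  shows "smooth_fun U g"
  by (rule smooth_fun_coinduct_open[where P = "smooth_fun U", OF assms(1,2)])
    (use assms(3) smooth_fun_differentiable smooth_fun_partial in blast)+

lemma smooth_fun_subset:
  assumes "smooth_fun U f" "V \<subseteq> U"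
  shows "smooth_fun V f"
  by (rule smooth_fun_coinduct[where X = "smooth_fun U", OF assms(1)])
    (use assms(2) smooth_fun_differentiable smooth_fun_partial in blast)

lemma smooth_fun_local:
  assumes "\<And>y. y \<in> U \<Longrightarrow> \<exists>W. open W \<and> y \<in> W \<and> W \<subseteq> U \<and> smooth_fun W f"
  shows "smooth_fun U f"
proof (rule smooth_fun_coinduct[where
      X = "\<lambda>f. \<forall>y\<in>U. \<exists>W. open W \<and> y \<in> W \<and> W \<subseteq> U \<and> smooth_fun W f"])
  show "\<forall>y\<in>U. \<exists>W. open W \<and> y \<in> W \<and> W \<subseteq> U \<and> smooth_fun W f" using assms by blast
next
  fix f assume "\<forall>y\<in>U. \<exists>W. open W \<and> y \<in> W \<and> W \<subseteq> U \<and> smooth_fun W f"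
  then show "(\<forall>x\<in>U. f differentiable (at x)) \<and> (\<forall>b\<in>Basis. \<forall>y\<in>U.
      \<exists>W. open W \<and> y \<in> W \<and> W \<subseteq> U \<and> smooth_fun W (\<lambda>x. frechet_derivative f (at x) b))"
    by (metis smooth_fun_differentiable smooth_fun_partial)
qed

lemma smooth_fun_affine:
  fixes f :: "'a::euclidean_space \<Rightarrow> real"
  assumes "linear f"
  shows "smooth_fun U (\<lambda>x. f x + c)"
proof (rule smooth_fun_coinduct[where X = "\<lambda>g. \<exists>f c. linear f \<and> g = (\<lambda>x. f x + c)"])
  show "\<exists>f' c'. linear f' \<and> (\<lambda>x. f x + c) = (\<lambda>x. f' x + c')" using assms by blast
next
  fix g :: "'a \<Rightarrow> real" assume "\<exists>f c. linear f \<and> g = (\<lambda>x. f x + c)"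
  then obtain f c where f: "linear f" and g: "g = (\<lambda>x. f x + c)" by blast
  have "(g has_derivative f) (at x)" for x
    unfolding g using f
    by (auto intro!: derivative_eq_intros bounded_linear_imp_has_derivative
        simp: linear_conv_bounded_linear)
  then have "frechet_derivative g (at x) = f" "g differentiable (at x)" for x
    by (metis frechet_derivative_at differentiable_def)+
  moreover have "linear (\<lambda>x::'a. 0::real)" by (rule linearI) simp_all
  ultimately show "(\<forall>x\<in>U. g differentiable (at x)) \<and> (\<forall>b\<in>Basis.
      \<exists>f c. linear f \<and> (\<lambda>x. frechet_derivative g (at x) b) = (\<lambda>x. f x + c))"
    by (auto intro!: exI[of _ "\<lambda>x::'a. 0::real"])
qed

lemma smooth_fun_const: "smooth_fun U (\<lambda>x. c)"
  using smooth_fun_affine[of "\<lambda>x. 0"] by (simp add: linearI)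

lemma smooth_fun_linear: "linear f \<Longrightarrow> smooth_fun U f"
  using smooth_fun_affine[of f U 0] by simp

text \<open>Sums of products of smooth functions form a class closed under partial derivatives (product
  rule), which is what the coinduction needs.\<close>
definition sum_prods :: "(('a \<Rightarrow> real) \<times> ('a \<Rightarrow> real)) list \<Rightarrow> 'a \<Rightarrow> real" where
  "sum_prods ps x = sum_list (map (\<lambda>(a, b). a x * b x) ps)"

lemma has_derivative_sum_prods:
  assumes "\<forall>(a, b)\<in>set ps. a differentiable (at x) \<and> b differentiable (at x)"
  shows "(sum_prods ps has_derivative (\<lambda>h. sum_list (map (\<lambda>(a, b).
      frechet_derivative a (at x) h * b x + a x * frechet_derivative b (at x) h) ps))) (at x)"
  using assms
proof (induction ps)
  case Nil
  then show ?case by (simp add: sum_prods_def)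
next
  case (Cons p ps)
  obtain a b where p: "p = (a, b)" by fastforce
  have da: "(a has_derivative frechet_derivative a (at x)) (at x)"
    and db: "(b has_derivative frechet_derivative b (at x)) (at x)"
    using Cons.prems p frechet_derivative_works by auto
  have e: "sum_prods (p # ps) = (\<lambda>x. a x * b x + sum_prods ps x)"
    by (auto simp: sum_prods_def p)
  have "(sum_prods ps has_derivative (\<lambda>h. sum_list (map (\<lambda>(a, b).
      frechet_derivative a (at x) h * b x + a x * frechet_derivative b (at x) h) ps))) (at x)"
    using Cons by simp
  from has_derivative_add[OF has_derivative_mult[OF da db] this] show ?case
    unfolding e by (simp add: p algebra_simps)
qed

definition sum_prods_deriv ::
    "'a::real_normed_vector \<Rightarrow> (('a \<Rightarrow> real) \<times> ('a \<Rightarrow> real)) list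
      \<Rightarrow> (('a \<Rightarrow> real) \<times> ('a \<Rightarrow> real)) list" where
  "sum_prods_deriv e ps = concat (map (\<lambda>(a, b).
     [(\<lambda>x. frechet_derivative a (at x) e, b), (a, \<lambda>x. frechet_derivative b (at x) e)]) ps)"

lemma frechet_derivative_sum_prods:
  assumes "\<forall>(a, b)\<in>set ps. a differentiable (at x) \<and> b differentiable (at x)"
  shows "sum_prods ps differentiable (at x)"
    and "frechet_derivative (sum_prods ps) (at x) e = sum_prods (sum_prods_deriv e ps) x"
proof -
  note D = has_derivative_sum_prods[OF assms]
  then show "sum_prods ps differentiable (at x)" unfolding differentiable_def by blast
  have "frechet_derivative (sum_prods ps) (at x) e = sum_list (map (\<lambda>(a, b).
      frechet_derivative a (at x) e * b x + a x * frechet_derivative b (at x) e) ps)"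
    using D[THEN frechet_derivative_at] by (metis (no_types, lifting))
  also have "\<dots> = sum_prods (sum_prods_deriv e ps) x"
    unfolding sum_prods_deriv_def sum_prods_def by (induction ps) auto
  finally show "frechet_derivative (sum_prods ps) (at x) e = sum_prods (sum_prods_deriv e ps) x" .
qed

lemma smooth_fun_sum_prods:
  assumes U: "open U" and ps: "\<forall>(a, b)\<in>set ps. smooth_fun U a \<and> smooth_fun U b"
    and f: "\<forall>x\<in>U. f x = sum_prods ps x"
  shows "smooth_fun U f"
proof (rule smooth_fun_coinduct_open[where P = "\<lambda>g. \<exists>ps. (\<forall>(a, b)\<in>set ps.
      smooth_fun U a \<and> smooth_fun U b) \<and> g = sum_prods ps", OF U _ f])
  show "\<exists>ps'. (\<forall>(a, b)\<in>set ps'. smooth_fun U a \<and> smooth_fun U b) \<and> sum_prods ps = sum_prods ps'"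
    using ps by blast
next
  fix g x assume "\<exists>ps. (\<forall>(a, b)\<in>set ps. smooth_fun U a \<and> smooth_fun U b) \<and> g = sum_prods ps"
    and x: "x \<in> U"
  then show "g differentiable (at x)"
    using frechet_derivative_sum_prods(1) smooth_fun_differentiable[OF _ x] by fastforce
next
  fix g and e :: 'a
  assume "\<exists>ps. (\<forall>(a, b)\<in>set ps. smooth_fun U a \<and> smooth_fun U b) \<and> g = sum_prods ps"
    and e: "e \<in> Basis"
  then obtain ps where ps: "\<forall>(a, b)\<in>set ps. smooth_fun U a \<and> smooth_fun U b"
    and g: "g = sum_prods ps" by blast
  have "\<forall>(a, b)\<in>set (sum_prods_deriv e ps). smooth_fun U a \<and> smooth_fun U b"
    using ps e smooth_fun_partial unfolding sum_prods_deriv_def by fastforce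
  moreover have "frechet_derivative g (at x) e = sum_prods (sum_prods_deriv e ps) x"
    if "x \<in> U" for x
    unfolding g
    by (rule frechet_derivative_sum_prods(2)) (use ps that smooth_fun_differentiable in fastforce)
  ultimately show "\<exists>g'. (\<exists>ps. (\<forall>(a, b)\<in>set ps. smooth_fun U a \<and> smooth_fun U b) \<and> g' = sum_prods ps)
      \<and> (\<forall>x\<in>U. frechet_derivative g (at x) e = g' x)"
    by blast
qed

lemma smooth_fun_mult:
  "open U \<Longrightarrow> smooth_fun U f \<Longrightarrow> smooth_fun U g \<Longrightarrow> smooth_fun U (\<lambda>x. f x * g x)"
  by (rule smooth_fun_sum_prods[of U "[(f, g)]"]) (auto simp: sum_prods_def)

lemma smooth_fun_add:
  "open U \<Longrightarrow> smooth_fun U f \<Longrightarrow> smooth_fun U g \<Longrightarrow> smooth_fun U (\<lambda>x. f x + g x)"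
  by (rule smooth_fun_sum_prods[of U "[(f, \<lambda>x. 1), (g, \<lambda>x. 1)]"])
    (auto simp: sum_prods_def smooth_fun_const)

lemma smooth_fun_minus: "open U \<Longrightarrow> smooth_fun U f \<Longrightarrow> smooth_fun U (\<lambda>x. - f x)"
  using smooth_fun_mult[OF _ smooth_fun_const, of U f "-1"] by simp

lemma smooth_fun_diff:
  "open U \<Longrightarrow> smooth_fun U f \<Longrightarrow> smooth_fun U g \<Longrightarrow> smooth_fun U (\<lambda>x. f x - g x)"
  using smooth_fun_add[OF _ _ smooth_fun_minus, of U f g] by simp

lemma smooth_fun_sum:
  assumes "open U" "finite I" "\<And>i. i \<in> I \<Longrightarrow> smooth_fun U (f i)"
  shows "smooth_fun U (\<lambda>x. \<Sum>i\<in>I. f i x)"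
  using assms(2,3)
  by (induction I rule: finite_induct) (auto intro: smooth_fun_add[OF assms(1)] smooth_fun_const)

lemma smooth_fun_prod:
  assumes "open U" "finite I" "\<And>i. i \<in> I \<Longrightarrow> smooth_fun U (f i)"
  shows "smooth_fun U (\<lambda>x. \<Prod>i\<in>I. f i x)"
  using assms(2,3)
  by (induction I rule: finite_induct) (auto intro: smooth_fun_mult[OF assms(1)] smooth_fun_const)

lemma smooth_fun_power: "open U \<Longrightarrow> smooth_fun U f \<Longrightarrow> smooth_fun U (\<lambda>x. f x ^ n)"
  using smooth_fun_prod[of U "{..<n}" "\<lambda>i. f"] by simp

text \<open>Likewise polynomials in 1 / f with smooth coefficients, for smoothness of 1 / f.\<close>
definition inverse_poly :: "('a \<Rightarrow> real) \<Rightarrow> (('a \<Rightarrow> real) \<times> nat) list \<Rightarrow> 'a \<Rightarrow> real" where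
  "inverse_poly f ps x = sum_list (map (\<lambda>(a, k). a x * inverse (f x) ^ k) ps)"

lemma has_derivative_inverse_poly:
  assumes "\<forall>(a, k)\<in>set ps. a differentiable (at x)" "f differentiable (at x)" "f x \<noteq> 0"
  shows "(inverse_poly f ps has_derivative (\<lambda>h. sum_list (map (\<lambda>(a, k).
      frechet_derivative a (at x) h * inverse (f x) ^ k
      + (- real k * a x * frechet_derivative f (at x) h) * inverse (f x) ^ (k + 1)) ps))) (at x)"
  using assms(1)
proof (induction ps)
  case Nil
  then show ?case by (simp add: inverse_poly_def)
next
  case (Cons p ps)
  obtain a k where p: "p = (a, k)" by fastforce
  have da: "(a has_derivative frechet_derivative a (at x)) (at x)"
    using Cons.prems p frechet_derivative_works by auto
  have df: "(f has_derivative frechet_derivative f (at x)) (at x)"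
    using assms(2) frechet_derivative_works by auto
  have e: "inverse_poly f ((a, k) # ps) = (\<lambda>x. a x * inverse (f x) ^ k + inverse_poly f ps x)"
    by (auto simp: inverse_poly_def)
  have "of_nat k * (- (inverse (f x) * h * inverse (f x))) * inverse (f x) ^ (k - 1)
      = - real k * h * inverse (f x) ^ (k + 1)" for h
    by (cases k) (simp_all add: algebra_simps)
  note di = has_derivative_power[OF Deriv.has_derivative_inverse[OF assms(3) df], of k,
      unfolded this]
  have "(inverse_poly f ps has_derivative (\<lambda>h. sum_list (map (\<lambda>(a, k).
      frechet_derivative a (at x) h * inverse (f x) ^ k
      + (- real k * a x * frechet_derivative f (at x) h) * inverse (f x) ^ (k + 1)) ps))) (at x)"
    using Cons by simp
  from has_derivative_add[OF has_derivative_mult[OF da di] this] show ?case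
    unfolding p e by (rule has_derivative_eq_rhs) (simp add: fun_eq_iff mult_ac)
qed

definition inverse_poly_deriv ::
    "('a::real_normed_vector \<Rightarrow> real) \<Rightarrow> 'a \<Rightarrow> (('a \<Rightarrow> real) \<times> nat) list
      \<Rightarrow> (('a \<Rightarrow> real) \<times> nat) list" where
  "inverse_poly_deriv f e ps = concat (map (\<lambda>(a, k). [(\<lambda>x. frechet_derivative a (at x) e, k),
     (\<lambda>x. - real k * a x * frechet_derivative f (at x) e, k + 1)]) ps)"

lemma frechet_derivative_inverse_poly:
  assumes "\<forall>(a, k)\<in>set ps. a differentiable (at x)" "f differentiable (at x)" "f x \<noteq> 0"
  shows "inverse_poly f ps differentiable (at x)"
    and "frechet_derivative (inverse_poly f ps) (at x) e
      = inverse_poly f (inverse_poly_deriv f e ps) x"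
proof -
  note D = has_derivative_inverse_poly[OF assms]
  then show "inverse_poly f ps differentiable (at x)" unfolding differentiable_def by blast
  have "frechet_derivative (inverse_poly f ps) (at x) e = sum_list (map (\<lambda>(a, k).
      frechet_derivative a (at x) e * inverse (f x) ^ k
      + (- real k * a x * frechet_derivative f (at x) e) * inverse (f x) ^ (k + 1)) ps)"
    using D[THEN frechet_derivative_at] by (metis (no_types, lifting))
  also have "\<dots> = inverse_poly f (inverse_poly_deriv f e ps) x"
    unfolding inverse_poly_deriv_def inverse_poly_def by (induction ps) auto
  finally show "frechet_derivative (inverse_poly f ps) (at x) e
      = inverse_poly f (inverse_poly_deriv f e ps) x" .
qed

lemma smooth_fun_inverse:
  assumes U: "open U" and f: "smooth_fun U f" and nz: "\<And>x. x \<in> U \<Longrightarrow> f x \<noteq> 0"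
  shows "smooth_fun U (\<lambda>x. inverse (f x))"
proof (rule smooth_fun_coinduct_open[where P = "\<lambda>g. \<exists>ps. (\<forall>(a, k)\<in>set ps. smooth_fun U a)
      \<and> g = inverse_poly f ps" and f = "inverse_poly f [(\<lambda>x. 1, 1)]", OF U])
  show "\<exists>ps. (\<forall>(a, k)\<in>set ps. smooth_fun U a) \<and> inverse_poly f [(\<lambda>x. 1, 1)] = inverse_poly f ps"
    by (rule exI[of _ "[(\<lambda>x. 1, 1)]"]) (simp add: smooth_fun_const)
  show "\<forall>x\<in>U. inverse (f x) = inverse_poly f [(\<lambda>x. 1, 1)] x"
    by (simp add: inverse_poly_def)
next
  fix g x assume "\<exists>ps. (\<forall>(a, k)\<in>set ps. smooth_fun U a) \<and> g = inverse_poly f ps"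
    and x: "x \<in> U"
  then show "g differentiable (at x)"
    using frechet_derivative_inverse_poly(1)[OF _ smooth_fun_differentiable[OF f x] nz[OF x]]
      smooth_fun_differentiable[OF _ x] by fastforce
next
  fix g and e :: 'a
  assume "\<exists>ps. (\<forall>(a, k)\<in>set ps. smooth_fun U a) \<and> g = inverse_poly f ps" and e: "e \<in> Basis"
  then obtain ps where ps: "\<forall>(a, k)\<in>set ps. smooth_fun U a" and g: "g = inverse_poly f ps"
    by blast
  have "smooth_fun U (\<lambda>x. frechet_derivative a (at x) e)"
    and "smooth_fun U (\<lambda>x. - real k * a x * frechet_derivative f (at x) e)"
    if "(a, k) \<in> set ps" for a k
    using ps that smooth_fun_partial[OF _ e] smooth_fun_partial[OF f e]
      smooth_fun_mult[OF U smooth_fun_mult[OF U smooth_fun_const]] by fastforce+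
  then have "\<forall>(a, k)\<in>set (inverse_poly_deriv f e ps). smooth_fun U a"
    unfolding inverse_poly_deriv_def by fastforce
  moreover have "frechet_derivative g (at x) e = inverse_poly f (inverse_poly_deriv f e ps) x"
    if x: "x \<in> U" for x
    unfolding g
    by (rule frechet_derivative_inverse_poly(2)[OF _ smooth_fun_differentiable[OF f x] nz[OF x]])
      (use ps x smooth_fun_differentiable in fastforce)
  ultimately show "\<exists>g'. (\<exists>ps. (\<forall>(a, k)\<in>set ps. smooth_fun U a) \<and> g' = inverse_poly f ps)
      \<and> (\<forall>x\<in>U. frechet_derivative g (at x) e = g' x)"
    by blast
qed

lemma smooth_fun_divide:
  "open U \<Longrightarrow> smooth_fun U f \<Longrightarrow> smooth_fun U g \<Longrightarrow> (\<And>x. x \<in> U \<Longrightarrow> g x \<noteq> 0) \<Longrightarrow>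
    smooth_fun U (\<lambda>x. f x / g x)"
  using smooth_fun_mult[OF _ _ smooth_fun_inverse, of U f g] by (simp add: divide_inverse)

lemma smooth_fun_det:
  fixes M :: "'a::euclidean_space \<Rightarrow> real^'n^'n"
  assumes U: "open U" and M: "\<And>i j. smooth_fun U (\<lambda>x. M x $ i $ j)"
  shows "smooth_fun U (\<lambda>x. det (M x))"
proof -
  have "smooth_fun U (\<lambda>x. \<Prod>i\<in>UNIV. M x $ i $ p i)" for p :: "'n \<Rightarrow> 'n"
    by (rule smooth_fun_prod[OF U finite]) (rule M)
  then show ?thesis
    unfolding det_def
    by (intro smooth_fun_sum[OF U] finite_permutations smooth_fun_mult[OF U smooth_fun_const]) auto
qed

lemma frechet_derivative_compose_Basis:
  fixes G :: "'a::euclidean_space \<Rightarrow> 'b::euclidean_space"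
  assumes G: "(G has_derivative G') (at y)" and h: "h differentiable (at (G y))"
  shows "frechet_derivative (\<lambda>y. h (G y)) (at y) b
    = (\<Sum>k\<in>Basis. (G' b \<bullet> k) * frechet_derivative h (at (G y)) k)"
proof -
  have Dh: "(h has_derivative frechet_derivative h (at (G y))) (at (G y))"
    using h frechet_derivative_works by blast
  have "frechet_derivative (\<lambda>y. h (G y)) (at y) b = frechet_derivative h (at (G y)) (G' b)"
    using has_derivative_compose[OF G Dh, THEN frechet_derivative_at] by metis
  also have "\<dots> = frechet_derivative h (at (G y)) (\<Sum>k\<in>Basis. (G' b \<bullet> k) *\<^sub>R k)"
    by (simp add: euclidean_representation)
  also have "\<dots> = (\<Sum>k\<in>Basis. (G' b \<bullet> k) * frechet_derivative h (at (G y)) k)"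
    using has_derivative_linear[OF Dh] by (simp add: linear_sum linear_scale)
  finally show ?thesis .
qed

text \<open>The partial derivatives of G, read as functions of G y, must be smooth on V: this is what lets
  the chain rule be iterated.\<close>
lemma smooth_fun_compose:
  fixes G :: "'a::euclidean_space \<Rightarrow> 'b::euclidean_space"
  assumes W: "open W" and V: "open V" and GV: "G ` W \<subseteq> V"
    and dG: "\<And>y. y \<in> W \<Longrightarrow> (G has_derivative G' y) (at y)"
    and m: "\<And>k b. k \<in> Basis \<Longrightarrow> b \<in> Basis \<Longrightarrow> smooth_fun V (m k b)"
    and m_eq: "\<And>k b y. k \<in> Basis \<Longrightarrow> b \<in> Basis \<Longrightarrow> y \<in> W \<Longrightarrow> G' y b \<bullet> k = m k b (G y)"
    and h: "smooth_fun V h"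
  shows "smooth_fun W (\<lambda>y. h (G y))"
proof (rule smooth_fun_coinduct_open[where P = "\<lambda>f. \<exists>h. smooth_fun V h \<and> f = (\<lambda>y. h (G y))", OF W])
  show "\<exists>h'. smooth_fun V h' \<and> (\<lambda>y. h (G y)) = (\<lambda>y. h' (G y))" using h by blast
next
  fix f y assume "\<exists>h. smooth_fun V h \<and> f = (\<lambda>y. h (G y))" and y: "y \<in> W"
  then obtain h where h: "smooth_fun V h" and f: "f = (\<lambda>y. h (G y))" by blast
  have "G y \<in> V" using GV y by blast
  from has_derivative_compose[OF dG[OF y] smooth_fun_has_derivative[OF h this]]
  show "f differentiable (at y)"
    unfolding f differentiable_def by blast
next
  fix f and b :: 'a
  assume "\<exists>h. smooth_fun V h \<and> f = (\<lambda>y. h (G y))" and b: "b \<in> Basis"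
  then obtain h where h: "smooth_fun V h" and f: "f = (\<lambda>y. h (G y))" by blast
  define h' where "h' x = (\<Sum>k\<in>Basis. m k b x * frechet_derivative h (at x) k)" for x
  have "smooth_fun V h'"
    unfolding h'_def
    by (rule smooth_fun_sum[OF V finite_Basis],
        rule smooth_fun_mult[OF V m[OF _ b] smooth_fun_partial[OF h]])
  moreover have "frechet_derivative f (at y) b = h' (G y)" if y: "y \<in> W" for y
    unfolding f h'_def
    using frechet_derivative_compose_Basis[OF dG[OF y] smooth_fun_differentiable[OF h]] GV y m_eq b
    by (auto intro!: sum.cong)
  ultimately show "\<exists>f'. (\<exists>h. smooth_fun V h \<and> f' = (\<lambda>y. h (G y))) \<and>
      (\<forall>y\<in>W. frechet_derivative f (at y) b = f' y)"
    by (intro exI[of _ "\<lambda>y. h' (G y)"]) blast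
qed simp

definition cramer_inv :: "real^'n^'n \<Rightarrow> real^'n^'n" where
  "cramer_inv M = (\<chi> k j. det (\<chi> i l. if l = k then axis j 1 $ i else M $ i $ l) / det M)"

lemma matrix_mult_cramer_inv: "det M \<noteq> 0 \<Longrightarrow> M ** cramer_inv M = mat 1"
proof -
  assume d: "det M \<noteq> 0"
  have col: "M *v (\<chi> k. cramer_inv M $ k $ j) = axis j 1" for j
    using cramer[OF d, of "\<chi> k. cramer_inv M $ k $ j" "axis j 1"] by (simp add: cramer_inv_def)
  have "(M ** cramer_inv M) $ i $ j = mat 1 $ i $ j" for i j
  proof -
    have "(M ** cramer_inv M) $ i $ j = (M *v (\<chi> k. cramer_inv M $ k $ j)) $ i"
      by (simp add: matrix_matrix_mult_def matrix_vector_mult_def)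
    also have "\<dots> = mat 1 $ i $ j" unfolding col by (simp add: axis_def mat_def)
    finally show ?thesis .
  qed
  then show ?thesis by (simp add: vec_eq_iff)
qed

lemma cramer_inv_mult_matrix: "det M \<noteq> 0 \<Longrightarrow> cramer_inv M ** M = mat 1"
  using matrix_mult_cramer_inv matrix_left_right_inverse by blast

lemma smooth_fun_cramer_inv:
  fixes M :: "'a::euclidean_space \<Rightarrow> real^'n^'n"
  assumes U: "open U" and M: "\<And>i j. smooth_fun U (\<lambda>x. M x $ i $ j)"
    and d: "\<And>x. x \<in> U \<Longrightarrow> det (M x) \<noteq> 0"
  shows "smooth_fun U (\<lambda>x. cramer_inv (M x) $ k $ j)"
proof -
  have "smooth_fun U (\<lambda>x. det (\<chi> i l. if l = k then axis j 1 $ i else M x $ i $ l))"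
  proof (rule smooth_fun_det[OF U])
    show "smooth_fun U (\<lambda>x. (\<chi> i l. if l = k then axis j 1 $ i else M x $ i $ l) $ i $ l)" for i l
      by (cases "l = k") (simp_all add: smooth_fun_const M)
  qed
  then show ?thesis
    unfolding cramer_inv_def using smooth_fun_divide[OF U _ smooth_fun_det[OF U M] d] by simp
qed

section \<open>Quaternions and rotations\<close>

lemma vector_4_nth [simp]:
  "(vector [a, b, c, d] :: 'a::zero^4) $ 1 = a"
  "(vector [a, b, c, d] :: 'a::zero^4) $ 2 = b"
  "(vector [a, b, c, d] :: 'a::zero^4) $ 3 = c"
  "(vector [a, b, c, d] :: 'a::zero^4) $ 4 = d"
  unfolding vector_def by simp_all

lemma vec4_eq_iff: "(x::'a^4) = y \<longleftrightarrow> x$1 = y$1 \<and> x$2 = y$2 \<and> x$3 = y$3 \<and> x$4 = y$4"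
  by (simp add: vec_eq_iff forall_4)

lemma mat3_eq_iff: "(A::'a^3^3) = B \<longleftrightarrow> (\<forall>i j. A$i$j = B$i$j)"
  by (simp add: vec_eq_iff)

lemma matrix_mult3_nth:
  "((A::real^3^3) ** B) $ i $ j = A$i$1 * B$1$j + A$i$2 * B$2$j + A$i$3 * B$3$j"
  by (simp add: matrix_matrix_mult_def sum_3)

lemma transpose_nth [simp]: "transpose A $ i $ j = A $ j $ i"
  by (simp add: transpose_def)

definition sqnorm :: "real^4 \<Rightarrow> real" where
  "sqnorm x = x$1^2 + x$2^2 + x$3^2 + x$4^2"

lemma sqnorm_eq_norm_power2: "sqnorm x = norm x ^ 2"
  by (simp add: sqnorm_def norm_vec_def L2_set_def sum_4 power2_eq_square)

lemma sqnorm_scaleR: "sqnorm (c *\<^sub>R x) = c^2 * sqnorm x"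
  by (simp add: sqnorm_def power2_eq_square algebra_simps)

lemma hmul_nth [simp]:
  "hmul q x $ 1 = q$1*x$1 - q$2*x$2 - q$3*x$3 - q$4*x$4"
  "hmul q x $ 2 = q$1*x$2 + q$2*x$1 + q$3*x$4 - q$4*x$3"
  "hmul q x $ 3 = q$1*x$3 - q$2*x$4 + q$3*x$1 + q$4*x$2"
  "hmul q x $ 4 = q$1*x$4 + q$2*x$3 - q$3*x$2 + q$4*x$1"
  by (simp_all add: hmul_def)

lemma sqnorm_hmul: "sqnorm (hmul p x) = sqnorm p * sqnorm x"
  by (simp add: sqnorm_def power2_eq_square algebra_simps)

lemma inner_hmul: "hmul q a \<bullet> hmul q b = sqnorm q * (a \<bullet> b)"
  by (simp add: inner_vec_def sum_4 sqnorm_def power2_eq_square algebra_simps)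

lemma hmul_one_left: "hmul (vector [1, 0, 0, 0]) x = x"
  by (simp add: vec4_eq_iff)

lemma hmul_add_left: "hmul (p + w) x = hmul p x + hmul w x"
  by (simp add: vec4_eq_iff algebra_simps)

lemma hmul_scaleR_left: "hmul (t *\<^sub>R w) x = t *\<^sub>R hmul w x"
  by (simp add: vec4_eq_iff algebra_simps)

lemma hmul_diff_left: "hmul (p - w) x = hmul p x - hmul w x"
  by (simp add: vec4_eq_iff algebra_simps)

lemma bounded_linear_hmul: "bounded_linear (hmul q)"
  by (rule linearI[THEN linear_conv_bounded_linear[THEN iffD1]])
    (simp_all add: vec4_eq_iff algebra_simps)

definition qconj :: "real^4 \<Rightarrow> real^4" where
  "qconj x = vector [x$1, - x$2, - x$3, - x$4]"

lemma qconj_nth [simp]: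
  "qconj x $ 1 = x$1" "qconj x $ 2 = - x$2" "qconj x $ 3 = - x$3" "qconj x $ 4 = - x$4"
  by (simp_all add: qconj_def)

lemma sqnorm_qconj: "sqnorm (qconj x) = sqnorm x"
  by (simp add: sqnorm_def)

lemma hmul_hmul_qconj: "hmul (hmul y (qconj x)) x = sqnorm x *\<^sub>R y"
  by (simp add: vec4_eq_iff sqnorm_def power2_eq_square algebra_simps)

lemma sqnorm_Q8: "q \<in> Q8 \<Longrightarrow> sqnorm q = 1"
  by (auto simp: Q8_def sqnorm_def)

lemma sqnorm_Q8_minus_one:
  "q \<in> Q8 \<Longrightarrow> q \<noteq> vector [1, 0, 0, 0] \<Longrightarrow> sqnorm (q - vector [1, 0, 0, 0]) \<ge> 2"
  by (auto simp: Q8_def sqnorm_def)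

text \<open>The matrix of v \<mapsto> hmul (hmul x v) (qconj x) on the imaginary quaternions: sqnorm x times
  the rotation in SO(3) covered by the unit quaternion x / norm x.\<close>
definition rotm :: "real^4 \<Rightarrow> real^3^3" where
  "rotm x = vector [
     vector [x$1^2 + x$2^2 - x$3^2 - x$4^2, 2 * (x$2*x$3 - x$1*x$4), 2 * (x$2*x$4 + x$1*x$3)],
     vector [2 * (x$2*x$3 + x$1*x$4), x$1^2 - x$2^2 + x$3^2 - x$4^2, 2 * (x$3*x$4 - x$1*x$2)],
     vector [2 * (x$2*x$4 - x$1*x$3), 2 * (x$3*x$4 + x$1*x$2), x$1^2 - x$2^2 - x$3^2 + x$4^2]]"

lemma rotm_nth [simp]:
  "rotm x $1$1 = x$1^2 + x$2^2 - x$3^2 - x$4^2"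
  "rotm x $1$2 = 2 * (x$2*x$3 - x$1*x$4)"
  "rotm x $1$3 = 2 * (x$2*x$4 + x$1*x$3)"
  "rotm x $2$1 = 2 * (x$2*x$3 + x$1*x$4)"
  "rotm x $2$2 = x$1^2 - x$2^2 + x$3^2 - x$4^2"
  "rotm x $2$3 = 2 * (x$3*x$4 - x$1*x$2)"
  "rotm x $3$1 = 2 * (x$2*x$4 - x$1*x$3)"
  "rotm x $3$2 = 2 * (x$3*x$4 + x$1*x$2)"
  "rotm x $3$3 = x$1^2 - x$2^2 - x$3^2 + x$4^2"
  by (simp_all add: rotm_def)

lemma rotm_hmul: "rotm (hmul p x) = rotm p ** rotm x"
  unfolding mat3_eq_iff forall_3 matrix_mult3_nth rotm_nth hmul_nth
  by (simp add: power2_eq_square algebra_simps)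

lemma rotm_mult_transpose: "rotm x ** transpose (rotm x) = (sqnorm x ^ 2) *\<^sub>R mat 1"
  unfolding mat3_eq_iff forall_3 matrix_mult3_nth transpose_nth rotm_nth
  by (simp add: mat_def sqnorm_def power2_eq_square algebra_simps)

lemma transpose_rotm_mult: "transpose (rotm x) ** rotm x = (sqnorm x ^ 2) *\<^sub>R mat 1"
  unfolding mat3_eq_iff forall_3 matrix_mult3_nth transpose_nth rotm_nth
  by (simp add: mat_def sqnorm_def power2_eq_square algebra_simps)

lemma rotm_diagonal_imp_Q8:
  assumes "\<forall>i j. i \<noteq> j \<longrightarrow> rotm q $ i $ j = 0" and "sqnorm q = 1"
  shows "q \<in> Q8"
proof -
  have off: "rotm q $ i $ j = 0" if "i \<noteq> j" for i j using assms(1) that by blast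
  have "rotm q $1$2 = 0" "rotm q $2$1 = 0" "rotm q $1$3 = 0" "rotm q $3$1 = 0"
    "rotm q $2$3 = 0" "rotm q $3$2 = 0" by (rule off; simp)+
  then have prod0: "q$1*q$2 = 0" "q$1*q$3 = 0" "q$1*q$4 = 0"
      "q$2*q$3 = 0" "q$2*q$4 = 0" "q$3*q$4 = 0"
    unfolding rotm_nth by (simp_all add: algebra_simps)
  have pm1: "a\<^sup>2 = 1 \<Longrightarrow> a = 1 \<or> a = -1" for a :: real
    by (metis power2_eq_1_iff)
  consider "q$2 = 0 \<and> q$3 = 0 \<and> q$4 = 0" | "q$1 = 0 \<and> q$3 = 0 \<and> q$4 = 0"
    | "q$1 = 0 \<and> q$2 = 0 \<and> q$4 = 0" | "q$1 = 0 \<and> q$2 = 0 \<and> q$3 = 0"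
    using prod0 by auto
  then show ?thesis
    using assms(2) pm1 unfolding Q8_def sqnorm_def
    by cases (auto simp: vec4_eq_iff)
qed

lemma smooth_fun_nth: "smooth_fun U (\<lambda>x::real^'n. x $ i)"
  by (rule smooth_fun_linear) (simp add: bounded_linear.linear bounded_linear_vec_nth)

lemmas smooth_fun_poly_intros = smooth_fun_add smooth_fun_mult smooth_fun_diff smooth_fun_minus
  smooth_fun_const smooth_fun_nth smooth_fun_power

lemma smooth_fun_sqnorm: "open U \<Longrightarrow> smooth_fun U sqnorm"
  unfolding sqnorm_def[abs_def] by (intro smooth_fun_poly_intros)

lemma smooth_fun_rotm: "open U \<Longrightarrow> smooth_fun U (\<lambda>x. rotm x $ k $ i)"
proof -
  assume U: "open U"
  have "\<forall>k i. smooth_fun U (\<lambda>x. rotm x $ k $ i)"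
    unfolding forall_3 rotm_nth using U by (intro conjI smooth_fun_poly_intros)
  then show ?thesis by blast
qed

section \<open>The spectrum curve\<close>

definition rcos :: "real \<Rightarrow> real" where "rcos s = (s^2 - 1) / (s^2 + 1)"
definition rsin :: "real \<Rightarrow> real" where "rsin s = 2 * s / (s^2 + 1)"

text \<open>A rational parametrisation of the circle of spectra \<lambda>1 + \<lambda>2 + \<lambda>3 = 0,
  \<lambda>1^2 + \<lambda>2^2 + \<lambda>3^2 = 2, namely rcos s (1, 0, -1) + rsin s (1, -2, 1) / sqrt 3.\<close>
definition ev1 :: "real \<Rightarrow> real" where "ev1 s = rcos s + rsin s / sqrt 3"
definition ev2 :: "real \<Rightarrow> real" where "ev2 s = - 2 * rsin s / sqrt 3"
definition ev3 :: "real \<Rightarrow> real" where "ev3 s = - rcos s + rsin s / sqrt 3"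

lemma rcos_rsin_sq: "rcos s ^ 2 + rsin s ^ 2 = 1"
proof -
  have "s^2 + 1 \<noteq> 0" by (simp add: add_nonneg_eq_0_iff)
  then show ?thesis
    by (simp add: rcos_def rsin_def power_divide divide_simps)
      (simp add: power2_eq_square algebra_simps)
qed

lemma ev_sum: "ev1 s + ev2 s + ev3 s = 0"
  by (simp add: ev1_def ev2_def ev3_def)

lemma ev_sum_squares: "ev1 s ^ 2 + ev2 s ^ 2 + ev3 s ^ 2 = 2"
proof -
  have "ev1 s ^ 2 + ev2 s ^ 2 + ev3 s ^ 2 = 2 * rcos s ^ 2 + 6 * (rsin s / sqrt 3) ^ 2"
    by (simp add: ev1_def ev2_def ev3_def power2_eq_square algebra_simps)
  also have "\<dots> = 2" using rcos_rsin_sq[of s] by (simp add: power_divide)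
  finally show ?thesis .
qed

lemma rcos_rsin_bounds:
  assumes "100 \<le> s"
  shows "3/4 < rcos s" "rcos s < 1" "0 < rsin s" "rsin s < 1/8"
proof -
  have s2: "100 * s \<le> s^2" using assms by (simp add: power2_eq_square)
  have p: "0 < s^2 + 1" by (smt (verit) zero_le_power2)
  show "3/4 < rcos s" "rcos s < 1"
    unfolding rcos_def using assms s2 p by (simp_all add: less_divide_eq divide_less_eq)
  show "0 < rsin s" "rsin s < 1/8"
    unfolding rsin_def using assms s2 p by (simp_all add: less_divide_eq divide_less_eq)
qed

lemma sqrt3_bounds: "1 < sqrt (3::real)" "sqrt (3::real) < 15/8"
  by (rule real_less_rsqrt, simp, rule real_less_lsqrt, simp_all add: power2_eq_square)

lemma ev_bounds:
  assumes "100 \<le> s"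
  shows "1/2 < ev1 s" "ev1 s < 2 / sqrt 3" "- 1/2 < ev2 s" "ev2 s < 0" "ev3 s < - 1/2"
proof -
  note b = rcos_rsin_bounds[OF assms] and r = sqrt3_bounds
  have "rsin s < sqrt 3 / 8" using b r by linarith
  then have "0 < rsin s / sqrt 3" "rsin s / sqrt 3 < 1/8" using b by (simp_all add: divide_less_eq)
  then show "1/2 < ev1 s" "- 1/2 < ev2 s" "ev2 s < 0" "ev3 s < - 1/2"
    using b unfolding ev1_def ev2_def ev3_def by linarith+
  have "sqrt 3 * rcos s < sqrt 3" using b r by simp
  then have "sqrt 3 * rcos s + rsin s < 2" using b r by linarith
  moreover have "ev1 s = (sqrt 3 * rcos s + rsin s) / sqrt 3"
    using r by (simp add: ev1_def add_divide_distrib)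
  ultimately show "ev1 s < 2 / sqrt 3" using r by (simp add: divide_strict_right_mono)
qed

lemma ev_distinct:
  assumes "100 \<le> s" "100 \<le> t"
  shows "ev1 s \<noteq> ev2 t" "ev1 s \<noteq> ev3 t" "ev2 s \<noteq> ev1 t" "ev2 s \<noteq> ev3 t"
    "ev3 s \<noteq> ev1 t" "ev3 s \<noteq> ev2 t"
  using ev_bounds[OF assms(1)] ev_bounds[OF assms(2)] by linarith+

lemma ev2_inj:
  assumes "100 \<le> s" "100 \<le> t" "ev2 s = ev2 t"
  shows "s = t"
proof -
  have "s^2 + 1 \<noteq> 0" "t^2 + 1 \<noteq> 0" by (smt (verit) zero_le_power2)+
  then have "s * (t^2 + 1) = t * (s^2 + 1)"
    using assms(3) by (simp add: ev2_def rsin_def frac_eq_eq)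
  then have "(s - t) * (s * t - 1) = 0" by (simp add: power2_eq_square algebra_simps)
  moreover have "100 * 100 \<le> s * t" by (rule mult_mono) (use assms in auto)
  ultimately show ?thesis by simp
qed

lemma has_real_derivative_rsin:
  "(rsin has_real_derivative 2 * (1 - s^2) / (s^2 + 1)^2) (at s)"
proof -
  have "s^2 + 1 \<noteq> 0" by (smt (verit) zero_le_power2)
  have "(rsin has_real_derivative
      (2 * (s^2 + 1) - 2 * s * (2 * s)) / ((s^2 + 1) * (s^2 + 1))) (at s)"
    unfolding rsin_def[abs_def]
    using \<open>s^2 + 1 \<noteq> 0\<close> by (intro DERIV_divide) (auto intro!: derivative_eq_intros)
  then show ?thesis by (simp add: power2_eq_square algebra_simps)
qed

lemma rcos_differentiable: "rcos differentiable (at s)"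
proof -
  have "s^2 + 1 \<noteq> 0" by (smt (verit) zero_le_power2)
  then have "(rcos has_real_derivative
      (2 * s * (s^2 + 1) - (s^2 - 1) * (2 * s)) / ((s^2 + 1) * (s^2 + 1))) (at s)"
    unfolding rcos_def[abs_def] by (intro DERIV_divide) (auto intro!: derivative_eq_intros)
  then show ?thesis using real_differentiable_def by blast
qed

lemma ev_differentiable:
  "ev1 differentiable (at s)" "ev2 differentiable (at s)" "ev3 differentiable (at s)"
  unfolding ev1_def[abs_def] ev2_def[abs_def] ev3_def[abs_def]
  using rcos_differentiable
    has_real_derivative_rsin[THEN real_differentiable_def[THEN iffD2, OF exI]]
  by (auto intro!: derivative_intros)

lemma ev_chain [derivative_intros]:
  assumes "(f has_real_derivative f') (at t)"
  shows "((\<lambda>t. ev1 (f t)) has_real_derivative deriv ev1 (f t) * f') (at t)"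
    "((\<lambda>t. ev2 (f t)) has_real_derivative deriv ev2 (f t) * f') (at t)"
    "((\<lambda>t. ev3 (f t)) has_real_derivative deriv ev3 (f t) * f') (at t)"
  using DERIV_chain2[OF _ assms] ev_differentiable DERIV_deriv_iff_real_differentiable by blast+

lemma deriv_ev2_nonzero: "100 \<le> s \<Longrightarrow> deriv ev2 s \<noteq> 0"
proof -
  assume s: "100 \<le> s"
  have "(ev2 has_real_derivative - 2 / sqrt 3 * (2 * (1 - s^2) / (s^2 + 1)^2)) (at s)"
    using DERIV_cmult[OF has_real_derivative_rsin, of "- 2 / sqrt 3"]
    unfolding ev2_def[abs_def] by simp
  moreover have "s^2 + 1 \<noteq> 0" by (smt (verit) zero_le_power2)
  moreover have "1 * 1 < s * s" using s by (intro mult_strict_mono) auto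
  then have "1 - s^2 \<noteq> 0" by (simp add: power2_eq_square)
  ultimately show ?thesis by (simp add: DERIV_imp_deriv)
qed

section \<open>Conjugating the spectrum\<close>

definition evdiag :: "real \<Rightarrow> real^3^3" where
  "evdiag s = vector [vector [ev1 s, 0, 0], vector [0, ev2 s, 0], vector [0, 0, ev3 s]]"

lemma evdiag_nth [simp]:
  "evdiag s $1$1 = ev1 s" "evdiag s $1$2 = 0" "evdiag s $1$3 = 0"
  "evdiag s $2$1 = 0" "evdiag s $2$2 = ev2 s" "evdiag s $2$3 = 0"
  "evdiag s $3$1 = 0" "evdiag s $3$2 = 0" "evdiag s $3$3 = ev3 s"
  by (simp_all add: evdiag_def)

lemma transpose_evdiag: "transpose (evdiag s) = evdiag s"
  unfolding mat3_eq_iff forall_3 by simp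

lemma trace_evdiag: "trace (evdiag s) = 0"
  using ev_sum[of s] by (simp add: trace_def sum_3)

lemma trace_evdiag_square: "trace (evdiag s ** evdiag s) = 2"
  using ev_sum_squares[of s] by (simp add: trace_def sum_3 matrix_mult3_nth power2_eq_square)

definition rconj :: "real^4 \<Rightarrow> real^3^3 \<Rightarrow> real^3^3" where
  "rconj p A = (1 / sqnorm p ^ 2) *\<^sub>R (transpose (rotm p) ** A ** rotm p)"

lemma rconj_hmul: "rconj (hmul p x) A = rconj x (rconj p A)"
  unfolding rconj_def rotm_hmul sqnorm_hmul matrix_transpose_mul
  by (simp add: matrix_mul_assoc matrix_scalar_ac scalar_matrix_assoc[symmetric]
      power_mult_distrib mult.commute)

lemma transpose_rconj: "transpose (rconj p A) = rconj p (transpose A)"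
  by (simp add: rconj_def transpose_scalar matrix_transpose_mul matrix_mul_assoc)

lemma mult_rotm_mult_transpose: "A ** rotm p ** transpose (rotm p) = (sqnorm p ^ 2) *\<^sub>R A"
  by (simp add: matrix_mul_assoc[symmetric] rotm_mult_transpose matrix_scalar_ac)

lemma rconj_mult: "sqnorm p \<noteq> 0 \<Longrightarrow> rconj p A ** rconj p B = rconj p (A ** B)"
  unfolding rconj_def
  by (simp add: matrix_mul_assoc matrix_scalar_ac scalar_matrix_assoc[symmetric]
      mult_rotm_mult_transpose power2_eq_square)

lemma trace_rconj: "sqnorm p \<noteq> 0 \<Longrightarrow> trace (rconj p A) = trace A"
proof -
  assume n: "sqnorm p \<noteq> 0"
  have trace_scaleR: "trace (c *\<^sub>R M) = c * trace M" for c and M :: "real^3^3"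
    by (simp add: trace_def sum_distrib_left)
  have "trace (transpose (rotm p) ** A ** rotm p) = trace (rotm p ** transpose (rotm p) ** A)"
    by (metis trace_mul_sym matrix_mul_assoc)
  also have "\<dots> = sqnorm p ^ 2 * trace A"
    by (simp add: rotm_mult_transpose scalar_matrix_assoc[symmetric] trace_scaleR)
  finally show ?thesis
    using n by (simp add: rconj_def trace_scaleR)
qed

lemma rotm_rconj: "sqnorm p \<noteq> 0 \<Longrightarrow> rotm p ** rconj p A ** transpose (rotm p) = (sqnorm p ^ 2) *\<^sub>R A"
  unfolding rconj_def
  by (simp add: matrix_mul_assoc matrix_scalar_ac scalar_matrix_assoc[symmetric] power2_eq_square
      mult_rotm_mult_transpose rotm_mult_transpose)

lemma rconj_Q8_evdiag: "q \<in> Q8 \<Longrightarrow> rconj q (evdiag s) = evdiag s"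
proof -
  assume q: "q \<in> Q8"
  then have "transpose (rotm q) ** evdiag s ** rotm q = evdiag s"
    unfolding Q8_def mat3_eq_iff forall_3 matrix_mult3_nth transpose_nth by auto
  then show ?thesis by (simp add: rconj_def sqnorm_Q8[OF q])
qed

definition Psi :: "real^4 \<Rightarrow> real^3^3" where
  "Psi x = rconj x (evdiag (sqnorm x))"

lemma Psi_hmul: "Psi (hmul p x) = rconj x (rconj p (evdiag (sqnorm p * sqnorm x)))"
  by (simp add: Psi_def rconj_hmul sqnorm_hmul)

lemma Psi_hmul_Q8: "q \<in> Q8 \<Longrightarrow> Psi (hmul q x) = Psi x"
  unfolding Psi_hmul by (simp add: rconj_Q8_evdiag sqnorm_Q8 Psi_def)

lemma transpose_Psi: "transpose (Psi x) = Psi x"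
  by (simp add: Psi_def transpose_rconj transpose_evdiag)

lemma trace_Psi: "sqnorm x \<noteq> 0 \<Longrightarrow> trace (Psi x) = 0"
  by (simp add: Psi_def trace_rconj trace_evdiag)

lemma trace_Psi_square: "sqnorm x \<noteq> 0 \<Longrightarrow> trace (Psi x ** transpose (Psi x)) = 2"
  by (simp add: transpose_Psi) (simp add: Psi_def rconj_mult trace_rconj trace_evdiag_square)

lemma rconj_evdiag_nth: "rconj p (evdiag s) $ i $ j =
    (rotm p$1$i * ev1 s * rotm p$1$j + rotm p$2$i * ev2 s * rotm p$2$j
      + rotm p$3$i * ev3 s * rotm p$3$j)
    / sqnorm p ^ 2"
  unfolding rconj_def vector_scaleR_component matrix_mult3_nth transpose_nth evdiag_nth
  by (simp add: divide_inverse algebra_simps)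

lemma rotm_col_sum_squares: "rotm x$1$k ^ 2 + rotm x$2$k ^ 2 + rotm x$3$k ^ 2 = sqnorm x ^ 2"
proof -
  have "(transpose (rotm x) ** rotm x) $ k $ k = sqnorm x ^ 2"
    unfolding transpose_rotm_mult by (simp add: mat_def)
  then show ?thesis unfolding matrix_mult3_nth transpose_nth by (simp add: power2_eq_square)
qed

lemma Psi_33_less:
  assumes "100 \<le> sqnorm x"
  shows "Psi x $3$3 < 2 / sqrt 3"
proof -
  let ?s = "sqnorm x" and ?R = "rotm x"
  have s: "0 < ?s" using assms by simp
  have "Psi x $3$3 = (?R$1$3^2 * ev1 ?s + ?R$2$3^2 * ev2 ?s + ?R$3$3^2 * ev3 ?s) / ?s^2"
    unfolding Psi_def rconj_evdiag_nth by (simp del: rotm_nth add: power2_eq_square algebra_simps)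
  also have "\<dots> \<le> (?R$1$3^2 * ev1 ?s + ?R$2$3^2 * ev1 ?s + ?R$3$3^2 * ev1 ?s) / ?s^2"
    using ev_bounds[OF assms] s
    by (intro divide_right_mono add_mono mult_left_mono) (simp_all del: rotm_nth)
  also have "\<dots> = ev1 ?s"
    using rotm_col_sum_squares[of x 3] s
    by (simp del: rotm_nth add: distrib_left[symmetric] mult.commute)
  also have "\<dots> < 2 / sqrt 3" using ev_bounds[OF assms] by simp
  finally show ?thesis .
qed

lemma rconj_scaleR: "c \<noteq> 0 \<Longrightarrow> rconj (c *\<^sub>R p) A = rconj p A"
proof -
  assume c: "c \<noteq> 0"
  have "rotm (c *\<^sub>R p) = c^2 *\<^sub>R rotm p"
    unfolding mat3_eq_iff forall_3 by (simp add: power2_eq_square algebra_simps)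
  then show ?thesis
    using c by (simp add: rconj_def sqnorm_scaleR transpose_scalar matrix_scalar_ac
        scalar_matrix_assoc[symmetric] power_mult_distrib)
qed

lemma rotm_mult_rconj: "sqnorm p \<noteq> 0 \<Longrightarrow> rotm p ** rconj p A = A ** rotm p"
  unfolding rconj_def
  by (simp add: matrix_scalar_ac matrix_mul_assoc rotm_mult_transpose
      scalar_matrix_assoc[symmetric] power2_eq_square)

lemma rconj_inject:
  assumes "sqnorm p \<noteq> 0"
  shows "rconj p A = rconj p B \<longleftrightarrow> A = B"
proof
  assume "rconj p A = rconj p B"
  then have "(sqnorm p ^ 2) *\<^sub>R A = (sqnorm p ^ 2) *\<^sub>R B"
    using rotm_rconj[OF assms] by metis
  then show "A = B" using assms by simp
qed simp

lemma evdiag_intertwine_offdiag: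
  assumes "100 \<le> s" "100 \<le> t" "M ** evdiag s = evdiag t ** M"
  shows "\<forall>i j. i \<noteq> j \<longrightarrow> M $ i $ j = 0"
proof -
  have "(M ** evdiag s) $ i $ j = (evdiag t ** M) $ i $ j" for i j using assms(3) by simp
  note e = this[unfolded matrix_mult3_nth evdiag_nth]
  note d = ev_distinct[OF assms(1,2)] ev_distinct[OF assms(2,1)]
  have "M$1$2 = 0" "M$1$3 = 0" "M$2$1 = 0" "M$2$3 = 0" "M$3$1 = 0" "M$3$2 = 0"
    using e[of 1 2] e[of 1 3] e[of 2 1] e[of 2 3] e[of 3 1] e[of 3 2] d by simp_all
  then show ?thesis unfolding forall_3 by simp
qed

lemma evdiag_intertwine_rotm:
  assumes s: "100 \<le> s" and t: "100 \<le> t" and p: "sqnorm p \<noteq> 0"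
    and comm: "evdiag t ** rotm p = rotm p ** evdiag s"
  shows "s = t" and "\<forall>i j. i \<noteq> j \<longrightarrow> rotm p $ i $ j = 0"
proof -
  show diag: "\<forall>i j. i \<noteq> j \<longrightarrow> rotm p $ i $ j = 0"
    by (rule evdiag_intertwine_offdiag[OF s t comm[symmetric]])
  then have "rotm p $2$2 ^ 2 = sqnorm p ^ 2"
    using arg_cong[OF rotm_mult_transpose[of p], of "\<lambda>M. M $2$2"]
    by (simp del: rotm_nth add: matrix_mult3_nth mat_def power2_eq_square)
  then have "rotm p $2$2 \<noteq> 0" using p by (auto simp del: rotm_nth)
  moreover have "ev2 t * rotm p $2$2 = rotm p $2$2 * ev2 s"
    using comm[THEN arg_cong, of "\<lambda>M. M $2$2"] diag by (simp del: rotm_nth add: matrix_mult3_nth)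
  ultimately have "ev2 s = ev2 t" by simp
  then show "s = t" by (rule ev2_inj[OF s t])
qed

lemma Psi_eq_imp_Q8:
  assumes x: "100 \<le> sqnorm x" and y: "100 \<le> sqnorm y" and eq: "Psi x = Psi y"
  shows "\<exists>q\<in>Q8. y = hmul q x"
proof -
  define p where "p = hmul y (qconj x)"
  let ?sx = "sqnorm x" and ?sy = "sqnorm y"
  have sx: "0 < ?sx" and sy: "0 < ?sy" using x y by simp_all
  have np: "sqnorm p = ?sx * ?sy" by (simp add: p_def sqnorm_hmul sqnorm_qconj)
  then have np0: "sqnorm p \<noteq> 0" using sx sy by simp
  have "y = (1 / ?sx) *\<^sub>R hmul p x" using sx by (simp add: p_def hmul_hmul_qconj)
  then have "Psi y = rconj x (rconj p (evdiag ?sy))"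
    using sx by (simp add: Psi_def rconj_scaleR rconj_hmul)
  then have "rconj p (evdiag ?sy) = evdiag ?sx"
    using eq sx rconj_inject[of x] unfolding Psi_def by simp
  then have "evdiag ?sy ** rotm p = rotm p ** evdiag ?sx"
    using rotm_mult_rconj[OF np0, of "evdiag ?sy"] by simp
  then have "?sx = ?sy" and diag: "\<forall>i j. i \<noteq> j \<longrightarrow> rotm p $ i $ j = 0"
    using evdiag_intertwine_rotm[OF x y np0] by blast+
  define q where "q = (1 / ?sx) *\<^sub>R p"
  have "q \<in> Q8"
  proof (rule rotm_diagonal_imp_Q8)
    have "rotm q = (1 / ?sx) ^ 2 *\<^sub>R rotm p"
      unfolding q_def mat3_eq_iff forall_3 by (simp add: power2_eq_square algebra_simps)
    then show "\<forall>i j. i \<noteq> j \<longrightarrow> rotm q $ i $ j = 0" using diag by simp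
    show "sqnorm q = 1"
      using sx \<open>?sx = ?sy\<close> by (simp add: q_def sqnorm_scaleR np power2_eq_square)
  qed
  moreover have "y = hmul q x"
    using sx by (simp add: q_def p_def hmul_scaleR_left hmul_hmul_qconj)
  ultimately show ?thesis by blast
qed

section \<open>Stereographic projection of the sphere of spectra\<close>

text \<open>With the coordinates ((A11 - A22)/2, A12, A13, A23, sqrt 3 / 2 * A33), the symmetric traceless
  matrices with trace (A ** transpose A) = 2 form the unit sphere of R^5, and the condition on A33
  removes its pole diag(-1, -1, 2) / sqrt 3.\<close>
definition stereo_dom :: "real^3^3 \<Rightarrow> bool" where
  "stereo_dom A \<longleftrightarrow> transpose A = A \<and> trace A = 0 \<and> trace (A ** transpose A) = 2
     \<and> A$3$3 < 2 / sqrt 3"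

definition stereo :: "real^3^3 \<Rightarrow> real^4" where
  "stereo A = (1 / (1 - sqrt 3 / 2 * A$3$3)) *\<^sub>R vector [(A$1$1 - A$2$2) / 2, A$1$2, A$1$3, A$2$3]"

text \<open>The point of the sphere with height l and horizontal coordinates u, as a matrix.\<close>
definition sphere_mat :: "real \<Rightarrow> real^4 \<Rightarrow> real^3^3" where
  "sphere_mat l u = vector [vector [u$1 - l / sqrt 3, u$2, u$3],
                            vector [u$2, - u$1 - l / sqrt 3, u$4],
                            vector [u$3, u$4, 2 * l / sqrt 3]]"

definition unstereo :: "real^4 \<Rightarrow> real^3^3" where
  "unstereo y = sphere_mat ((sqnorm y - 1) / (sqnorm y + 1)) ((2 / (sqnorm y + 1)) *\<^sub>R y)"

lemma stereo_domD:
  assumes "stereo_dom A"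
  shows "A$2$1 = A$1$2" "A$3$1 = A$1$3" "A$3$2 = A$2$3" "A$3$3 = - A$1$1 - A$2$2"
    "A$1$1^2 + A$2$2^2 + A$3$3^2 + 2 * (A$1$2^2 + A$1$3^2 + A$2$3^2) = 2"
    "sqrt 3 / 2 * A$3$3 < 1"
proof -
  have sym: "A$i$j = A$j$i" for i j
    using assms unfolding stereo_dom_def by (metis transpose_nth)
  then show "A$2$1 = A$1$2" "A$3$1 = A$1$3" "A$3$2 = A$2$3" by simp_all
  show "A$3$3 = - A$1$1 - A$2$2"
    using assms unfolding stereo_dom_def by (simp add: trace_def sum_3)
  show "A$1$1^2 + A$2$2^2 + A$3$3^2 + 2 * (A$1$2^2 + A$1$3^2 + A$2$3^2) = 2"
    using assms sym[of 2 1] sym[of 3 1] sym[of 3 2] unfolding stereo_dom_def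
    by (simp add: trace_def sum_3 matrix_mult3_nth power2_eq_square)
  show "sqrt 3 / 2 * A$3$3 < 1"
    using assms unfolding stereo_dom_def by (simp add: field_simps)
qed

lemma stereo_dom_sphere:
  assumes "stereo_dom A"
  shows "((A$1$1 - A$2$2) / 2)^2 + A$1$2^2 + A$1$3^2 + A$2$3^2 + (sqrt 3 / 2 * A$3$3)^2 = 1"
proof -
  note d = stereo_domD[OF assms]
  have "(sqrt 3 / 2 * A$3$3)^2 = 3/4 * A$3$3^2" by (simp add: power_mult_distrib power_divide)
  then show ?thesis
    using d(5) unfolding d(4) by (simp add: power2_eq_square field_simps)
qed

lemma sqnorm_stereo:
  assumes "stereo_dom A"
  shows "sqnorm (stereo A) = (1 + sqrt 3 / 2 * A$3$3) / (1 - sqrt 3 / 2 * A$3$3)"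
proof -
  define l where "l = sqrt 3 / 2 * A$3$3"
  have l: "l < 1" using stereo_domD(6)[OF assms] by (simp add: l_def)
  have sp: "((A$1$1 - A$2$2)/2)^2 + A$1$2^2 + A$1$3^2 + A$2$3^2 = (1 - l) * (1 + l)"
    using stereo_dom_sphere[OF assms] unfolding l_def by (simp add: power2_eq_square algebra_simps)
  have "sqnorm (stereo A) = (((A$1$1 - A$2$2)/2)^2 + A$1$2^2 + A$1$3^2 + A$2$3^2) / (1 - l)^2"
    unfolding stereo_def l_def[symmetric] sqnorm_scaleR by (simp add: sqnorm_def power_divide)
  also have "\<dots> = (1 + l) / (1 - l)" unfolding sp using l by (simp add: power2_eq_square)
  finally show ?thesis unfolding l_def .
qed

lemma unstereo_stereo:
  assumes "stereo_dom A"
  shows "unstereo (stereo A) = A"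
proof -
  define l where "l = sqrt 3 / 2 * A$3$3"
  have l: "l < 1" using stereo_domD(6)[OF assms] by (simp add: l_def)
  have n: "sqnorm (stereo A) = (1 + l) / (1 - l)" using sqnorm_stereo[OF assms] by (simp add: l_def)
  have "(sqnorm (stereo A) - 1) / (sqnorm (stereo A) + 1) = l"
    and "2 / (sqnorm (stereo A) + 1) = 1 - l"
    unfolding n using l by (simp_all add: field_simps)
  then have "unstereo (stereo A) = sphere_mat l ((1 - l) *\<^sub>R stereo A)"
    by (simp add: unstereo_def)
  also have "(1 - l) *\<^sub>R stereo A = vector [(A$1$1 - A$2$2) / 2, A$1$2, A$1$3, A$2$3]"
    using l by (simp add: stereo_def l_def)
  also have "sphere_mat l \<dots> = A"
    using stereo_domD(1-4)[OF assms]
    by (simp add: sphere_mat_def mat3_eq_iff forall_3 l_def field_simps)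
  finally show ?thesis .
qed

lemma stereo_inj: "stereo_dom A \<Longrightarrow> stereo_dom B \<Longrightarrow> stereo A = stereo B \<Longrightarrow> A = B"
  by (metis unstereo_stereo)

lemma smooth_fun_unstereo:
  assumes U: "open U"
  shows "smooth_fun U (\<lambda>y. unstereo y $ i $ j)"
proof -
  have pos: "sqnorm y + 1 \<noteq> 0" for y
    by (smt (verit) sqnorm_eq_norm_power2 zero_le_power2)
  have l: "smooth_fun U (\<lambda>y. (sqnorm y - 1) / (sqnorm y + 1))"
    by (intro smooth_fun_divide[OF U] smooth_fun_diff[OF U] smooth_fun_add[OF U]
        smooth_fun_sqnorm[OF U] smooth_fun_const) (simp add: pos)
  have u: "smooth_fun U (\<lambda>y. ((2 / (sqnorm y + 1)) *\<^sub>R y) $ k)" for k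
    unfolding vector_scaleR_component real_scaleR_def
    by (intro smooth_fun_mult[OF U] smooth_fun_divide[OF U] smooth_fun_add[OF U]
        smooth_fun_sqnorm[OF U] smooth_fun_const smooth_fun_nth) (simp add: pos)
  have "\<forall>i j. smooth_fun U (\<lambda>y. unstereo y $ i $ j)"
    unfolding unstereo_def sphere_mat_def forall_3 vector_3
    by (intro conjI smooth_fun_diff[OF U] smooth_fun_minus[OF U] smooth_fun_divide[OF U]
        smooth_fun_mult[OF U] smooth_fun_const l u) simp_all
  then show ?thesis by blast
qed

lemma Psi_stereo_dom: "100 \<le> sqnorm x \<Longrightarrow> stereo_dom (Psi x)"
  unfolding stereo_dom_def using transpose_Psi trace_Psi trace_Psi_square Psi_33_less by simp

section \<open>The map Phi on the annulus\<close>

definition annulus :: "(real^4) set" where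
  "annulus = {x. exp 200 < norm x}"

lemma open_annulus: "open annulus"
  unfolding annulus_def by (simp add: open_Collect_less continuous_on_norm_id continuous_on_const)

lemma annulus_sqnorm: "x \<in> annulus \<Longrightarrow> 100 \<le> sqnorm x"
proof -
  assume "x \<in> annulus"
  moreover have "1 + 200 \<le> exp (200::real)" by (rule exp_ge_add_one_self)
  ultimately have "10 \<le> norm x" by (simp add: annulus_def)
  then have "10 ^ 2 \<le> norm x ^ 2" by (rule power_mono) simp
  then show ?thesis by (simp add: sqnorm_eq_norm_power2)
qed

lemma annulus_sqnorm_nonzero: "x \<in> annulus \<Longrightarrow> sqnorm x \<noteq> 0"
  using annulus_sqnorm by fastforce

lemma hmul_Q8_annulus: "q \<in> Q8 \<Longrightarrow> x \<in> annulus \<Longrightarrow> hmul q x \<in> annulus"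
proof -
  assume q: "q \<in> Q8" and x: "x \<in> annulus"
  have "norm (hmul q x) ^ 2 = norm x ^ 2"
    using sqnorm_hmul[of q x] sqnorm_Q8[OF q] by (simp add: sqnorm_eq_norm_power2)
  then show ?thesis using x by (simp add: annulus_def power2_eq_iff_nonneg)
qed

definition Phi :: "real^4 \<Rightarrow> real^4" where
  "Phi x = stereo (Psi x)"

lemma Phi_eq_iff:
  assumes "x \<in> annulus" "y \<in> annulus"
  shows "Phi x = Phi y \<longleftrightarrow> (\<exists>q\<in>Q8. y = hmul q x)"
  using Psi_eq_imp_Q8 stereo_inj Psi_stereo_dom annulus_sqnorm assms Psi_hmul_Q8
  unfolding Phi_def by metis

lemma Psi_eq_unstereo_Phi: "x \<in> annulus \<Longrightarrow> Psi x = unstereo (Phi x)"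
  by (simp add: Phi_def unstereo_stereo Psi_stereo_dom annulus_sqnorm)

lemma smooth_fun_ev_sqnorm:
  assumes U: "open U"
  shows "smooth_fun U (\<lambda>x. ev1 (sqnorm x))" "smooth_fun U (\<lambda>x. ev2 (sqnorm x))"
    "smooth_fun U (\<lambda>x. ev3 (sqnorm x))"
proof -
  have pos: "sqnorm x ^ 2 + 1 \<noteq> 0" for x by (smt (verit) zero_le_power2)
  have c: "smooth_fun U (\<lambda>x. rcos (sqnorm x))" and s: "smooth_fun U (\<lambda>x. rsin (sqnorm x))"
    unfolding rcos_def rsin_def
    by (intro smooth_fun_divide[OF U] smooth_fun_diff[OF U] smooth_fun_add[OF U]
        smooth_fun_mult[OF U] smooth_fun_power[OF U] smooth_fun_sqnorm[OF U] smooth_fun_const;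
        simp add: pos)+
  show "smooth_fun U (\<lambda>x. ev1 (sqnorm x))" "smooth_fun U (\<lambda>x. ev2 (sqnorm x))"
    "smooth_fun U (\<lambda>x. ev3 (sqnorm x))"
    unfolding ev1_def ev2_def ev3_def
    by (intro smooth_fun_add[OF U] smooth_fun_minus[OF U] smooth_fun_divide[OF U]
        smooth_fun_mult[OF U] smooth_fun_const c s; simp)+
qed

lemma smooth_fun_Psi:
  assumes U: "open U" and nz: "\<And>x. x \<in> U \<Longrightarrow> sqnorm x \<noteq> 0"
  shows "smooth_fun U (\<lambda>x. Psi x $ i $ j)"
  unfolding Psi_def rconj_evdiag_nth
  by (intro smooth_fun_divide[OF U] smooth_fun_add[OF U] smooth_fun_mult[OF U]
      smooth_fun_power[OF U] smooth_fun_rotm[OF U] smooth_fun_sqnorm[OF U]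
      smooth_fun_ev_sqnorm[OF U])
    (simp add: nz)

lemma Phi_nth:
  "Phi x $ 1 = (Psi x$1$1 - Psi x$2$2) / 2 / (1 - sqrt 3 / 2 * Psi x$3$3)"
  "Phi x $ 2 = Psi x$1$2 / (1 - sqrt 3 / 2 * Psi x$3$3)"
  "Phi x $ 3 = Psi x$1$3 / (1 - sqrt 3 / 2 * Psi x$3$3)"
  "Phi x $ 4 = Psi x$2$3 / (1 - sqrt 3 / 2 * Psi x$3$3)"
  by (simp_all add: Phi_def stereo_def)

lemma smooth_fun_Phi: "smooth_fun annulus (\<lambda>x. Phi x $ i)"
proof -
  have Psi: "smooth_fun annulus (\<lambda>x. Psi x $ i $ j)" for i j
    by (rule smooth_fun_Psi[OF open_annulus annulus_sqnorm_nonzero])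
  have "1 - sqrt 3 / 2 * Psi x $3$3 \<noteq> 0" if "x \<in> annulus" for x
    using stereo_domD(6)[OF Psi_stereo_dom[OF annulus_sqnorm[OF that]]] by simp
  then have "\<forall>i. smooth_fun annulus (\<lambda>x. Phi x $ i)"
    unfolding forall_4 Phi_nth
    by (intro conjI smooth_fun_divide[OF open_annulus] smooth_fun_diff[OF open_annulus]
        smooth_fun_mult[OF open_annulus] smooth_fun_const Psi) simp_all
  then show ?thesis by blast
qed

section \<open>Phi is an immersion\<close>

lemma differentiable_vec_nthI:
  fixes F :: "'a::real_normed_vector \<Rightarrow> real^'n"
  assumes "\<And>i. (\<lambda>z. F z $ i) differentiable (at x)"
  shows "F differentiable (at x)"
  using assms unfolding differentiable_componentwise_within[of F]
  by (auto simp: Basis_vec_def inner_axis)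

lemma frechet_derivative_vec_nth:
  fixes F :: "'a::real_normed_vector \<Rightarrow> real^'n"
  assumes "F differentiable (at x)"
  shows "frechet_derivative (\<lambda>z. F z $ i) (at x) = (\<lambda>v. frechet_derivative F (at x) v $ i)"
  using bounded_linear.has_derivative[OF bounded_linear_vec_nth
      assms[unfolded frechet_derivative_works], of i]
  by (metis frechet_derivative_at)

lemma has_real_derivative_along_line:
  assumes "(f has_derivative f') (at x)"
  shows "((\<lambda>t. f (x + t *\<^sub>R v)) has_real_derivative f' v) (at 0)"
proof -
  have "((\<lambda>t. x + t *\<^sub>R v) has_derivative (\<lambda>t. t *\<^sub>R v)) (at 0)"
    by (auto intro!: derivative_eq_intros)
  from has_derivative_compose[OF this] assms
  have "((\<lambda>t. f (x + t *\<^sub>R v)) has_derivative (\<lambda>t. f' (t *\<^sub>R v))) (at 0)" by simp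
  moreover have "f' (t *\<^sub>R v) = f' v * t" for t
    using linear_scale[OF has_derivative_linear[OF assms]] by simp
  ultimately show ?thesis by (simp add: has_field_derivative_def)
qed

lemma Phi_differentiable: "x \<in> annulus \<Longrightarrow> Phi differentiable (at x)"
  by (rule differentiable_vec_nthI) (rule smooth_fun_differentiable[OF smooth_fun_Phi])

text \<open>Psi factors through Phi (via unstereo), so a kernel vector of the derivative of Phi is one of
  the derivative of Psi.\<close>
lemma Psi_along_kernel:
  assumes x: "x \<in> annulus" and v: "frechet_derivative Phi (at x) v = 0"
  shows "((\<lambda>t. Psi (x + t *\<^sub>R v) $ a $ b) has_real_derivative 0) (at 0)"
proof -
  define F where "F y = unstereo y $ a $ b" for y
  define F' where "F' = frechet_derivative F (at (Phi x))"
  have dF: "(F has_derivative F') (at (Phi x))"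
    unfolding F'_def F_def
    by (rule smooth_fun_has_derivative[OF smooth_fun_unstereo[OF open_UNIV]]) simp
  have "((\<lambda>z. F (Phi z)) has_derivative (\<lambda>h. F' (frechet_derivative Phi (at x) h))) (at x)"
    using has_derivative_compose[OF Phi_differentiable[OF x, unfolded frechet_derivative_works]
        dF] .
  then have "((\<lambda>z. Psi z $ a $ b) has_derivative (\<lambda>h. F' (frechet_derivative Phi (at x) h))) (at x)"
    by (rule has_derivative_transform_within_open[OF _ open_annulus x])
      (simp add: F_def Psi_eq_unstereo_Phi)
  from has_real_derivative_along_line[OF this, of v] show ?thesis
    using linear_0[OF has_derivative_linear[OF dF]] v by simp
qed

lemma rconj_line_derivatives:
  fixes w :: "real^4" and s :: real
  defines "P t \<equiv> rconj (vector [1, 0, 0, 0] + t *\<^sub>R w)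
      (evdiag (sqnorm (vector [1, 0, 0, 0] + t *\<^sub>R w) * s))"
  shows "((\<lambda>t. P t $1$2) has_real_derivative - 2 * w$4 * (ev1 s - ev2 s)) (at 0)"
    and "((\<lambda>t. P t $1$3) has_real_derivative 2 * w$3 * (ev1 s - ev3 s)) (at 0)"
    and "((\<lambda>t. P t $2$3) has_real_derivative - 2 * w$2 * (ev2 s - ev3 s)) (at 0)"
    and "((\<lambda>t. P t $2$2) has_real_derivative deriv ev2 s * (2 * w$1 * s)) (at 0)"
  unfolding P_def rconj_evdiag_nth rotm_nth sqnorm_def vector_add_component vector_scaleR_component
    vector_4_nth
  by (rule derivative_eq_intros refl | simp add: algebra_simps)+

text \<open>Writing x + t v = hmul (1 + t w) x, the curve Psi (x + t v) is Psi x conjugated by the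
  rotation of 1 + t w, with eigenvalues moved by the change of norm; by the derivatives above,
  each component of w is detected by one entry.\<close>
lemma Phi_derivative_injective:
  assumes x: "x \<in> annulus" and v: "frechet_derivative Phi (at x) v = 0"
  shows "v = 0"
proof -
  define s where "s = sqnorm x"
  have s100: "100 \<le> s" using annulus_sqnorm[OF x] by (simp add: s_def)
  then have s0: "s \<noteq> 0" by simp
  define w where "w = (1 / s) *\<^sub>R hmul v (qconj x)"
  define e :: "real^4" where "e = vector [1, 0, 0, 0]"
  have line: "hmul (e + t *\<^sub>R w) x = x + t *\<^sub>R v" for t
    using s0
    by (simp add: e_def w_def hmul_add_left hmul_one_left hmul_scaleR_left hmul_hmul_qconj s_def)
  define P where "P t = rconj (e + t *\<^sub>R w) (evdiag (sqnorm (e + t *\<^sub>R w) * s))" for t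
  have "P t = (1 / s^2) *\<^sub>R (rotm x ** Psi (x + t *\<^sub>R v) ** transpose (rotm x))" for t
    using Psi_hmul[of "e + t *\<^sub>R w" x] rotm_rconj[of x "P t"] s0
    unfolding line P_def s_def by simp
  then have P_nth:
    "P t $ k $ l = (1 / s^2) * (rotm x ** Psi (x + t *\<^sub>R v) ** transpose (rotm x)) $ k $ l"
    for t k l by simp
  have P_deriv: "((\<lambda>t. P t $ k $ l) has_real_derivative 0) (at 0)" for k l
    unfolding P_nth matrix_mult3_nth transpose_nth
    by (rule derivative_eq_intros Psi_along_kernel[OF x v] refl | simp del: rotm_nth)+
  note D = rconj_line_derivatives[of w s, folded e_def, folded P_def]
  note distinct = ev_distinct[OF s100 s100]
  have "w$4 = 0" using DERIV_unique[OF D(1) P_deriv] distinct by auto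
  moreover have "w$3 = 0" using DERIV_unique[OF D(2) P_deriv] distinct by auto
  moreover have "w$2 = 0" using DERIV_unique[OF D(3) P_deriv] distinct by auto
  moreover have "w$1 = 0" using DERIV_unique[OF D(4) P_deriv] deriv_ev2_nonzero[OF s100] s0 by auto
  ultimately have "w = 0" by (simp add: vec4_eq_iff)
  moreover have "hmul w x = v" using s0 by (simp add: w_def hmul_scaleR_left hmul_hmul_qconj s_def)
  ultimately show ?thesis by (simp add: vec4_eq_iff)
qed

section \<open>Phi is a local diffeomorphism\<close>

definition jac :: "real^4 \<Rightarrow> real^4^4" where
  "jac x = matrix (frechet_derivative Phi (at x))"

lemma Phi_has_derivative_jac:
  assumes "x \<in> annulus"
  shows "(Phi has_derivative (\<lambda>v. jac x *v v)) (at x)"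
proof -
  have D: "(Phi has_derivative frechet_derivative Phi (at x)) (at x)"
    using Phi_differentiable[OF assms] frechet_derivative_works by blast
  moreover have "(\<lambda>v. jac x *v v) = frechet_derivative Phi (at x)"
    unfolding jac_def using matrix_vector_mul(2)[OF has_derivative_linear[OF D]] .
  ultimately show ?thesis by simp
qed

lemma frechet_derivative_Phi: "x \<in> annulus \<Longrightarrow> frechet_derivative Phi (at x) = (\<lambda>v. jac x *v v)"
  using Phi_has_derivative_jac frechet_derivative_at by metis

lemma smooth_fun_jac: "smooth_fun annulus (\<lambda>x. jac x $ i $ j)"
proof (rule smooth_fun_cong[OF open_annulus smooth_fun_partial[OF smooth_fun_Phi]])
  show "axis j 1 \<in> (Basis :: (real^4) set)" by (auto simp: Basis_vec_def)
  show "jac x $ i $ j = frechet_derivative (\<lambda>x. Phi x $ i) (at x) (axis j 1)" if "x \<in> annulus" for x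
    using frechet_derivative_vec_nth[OF Phi_differentiable[OF that]]
    by (simp add: jac_def matrix_def)
qed

lemma det_jac_nonzero: "x \<in> annulus \<Longrightarrow> det (jac x) \<noteq> 0"
proof -
  assume x: "x \<in> annulus"
  have "\<exists>B. B ** jac x = mat 1"
    unfolding matrix_left_invertible_ker
    using Phi_derivative_injective[OF x] by (simp add: frechet_derivative_Phi[OF x])
  then show ?thesis using invertible_det_nz invertible_left_inverse by blast
qed

definition jinv :: "real^4 \<Rightarrow> real^4^4" where
  "jinv x = cramer_inv (jac x)"

lemma jac_jinv: "x \<in> annulus \<Longrightarrow> jac x ** jinv x = mat 1"
  and jinv_jac: "x \<in> annulus \<Longrightarrow> jinv x ** jac x = mat 1"
  by (simp_all add: jinv_def matrix_mult_cramer_inv cramer_inv_mult_matrix det_jac_nonzero)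

lemma smooth_fun_jinv: "smooth_fun annulus (\<lambda>x. jinv x $ i $ j)"
  unfolding jinv_def by (rule smooth_fun_cramer_inv[OF open_annulus smooth_fun_jac det_jac_nonzero])

lemma continuous_on_Phi: "S \<subseteq> annulus \<Longrightarrow> continuous_on S Phi"
  by (meson Phi_has_derivative_jac continuous_at_imp_continuous_on has_derivative_continuous
      subsetD)

lemma jac_comp_jinv: "x \<in> annulus \<Longrightarrow> (\<lambda>v. jac x *v v) \<circ> (\<lambda>v. jinv x *v v) = id"
  using jac_jinv by (auto simp: matrix_vector_mul_assoc)

lemma open_Phi_image:
  assumes S: "open S" "S \<subseteq> annulus"
  shows "open (Phi ` S)"
proof -
  have "Phi x \<in> interior (Phi ` S)" if x: "x \<in> S" for x
    using sussmann_open_mapping[OF S(1) continuous_on_Phi[OF S(2)] x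
        Phi_has_derivative_jac[of x] _ jac_comp_jinv[of x] subset_refl]
      x S interior_open[OF S(1)]
    by (auto simp: linear_conv_bounded_linear)
  then show ?thesis by (metis image_subset_iff interior_eq interior_subset subset_antisym)
qed

text \<open>Distinct points of a Q8-orbit are at distance at least sqrt 2 times their norm.\<close>
lemma inj_on_Phi_ball:
  assumes x0: "x0 \<in> annulus"
  shows "inj_on Phi (ball x0 (norm x0 / 4) \<inter> annulus)"
proof (rule inj_onI)
  fix x y
  assume x: "x \<in> ball x0 (norm x0 / 4) \<inter> annulus" and y: "y \<in> ball x0 (norm x0 / 4) \<inter> annulus"
    and "Phi x = Phi y"
  then obtain q where q: "q \<in> Q8" "y = hmul q x" using Phi_eq_iff by blast
  show "x = y"
  proof (rule ccontr)
    assume "x \<noteq> y"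
    then have "q \<noteq> vector [1, 0, 0, 0]" using q hmul_one_left by metis
    then have "2 * norm x ^ 2 \<le> sqnorm (q - vector [1, 0, 0, 0]) * norm x ^ 2"
      using sqnorm_Q8_minus_one[OF q(1)] by (simp add: mult_right_mono)
    also have "\<dots> = norm (y - x) ^ 2"
      unfolding q(2) hmul_diff_left[of q "vector [1, 0, 0, 0]" x, unfolded hmul_one_left, symmetric]
      by (simp only: sqnorm_eq_norm_power2[symmetric] sqnorm_hmul)
    finally have far: "2 * norm x ^ 2 \<le> norm (y - x) ^ 2" .
    have "norm (x0 - x) < norm x0 / 4" "norm (x0 - y) < norm x0 / 4"
      using x y by (simp_all add: dist_norm)
    moreover have "norm (y - x) \<le> norm (x0 - y) + norm (x0 - x)"
      by (metis norm_diff_triangle_le norm_minus_commute order_refl)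
    moreover have "norm x0 \<le> norm x + norm (x0 - x)"
      by (metis norm_triangle_sub add.commute)
    ultimately have "norm (y - x) < norm x0 / 2" "3 * norm x0 / 4 < norm x" by linarith+
    then have "norm (y - x) ^ 2 < (norm x0 / 2) ^ 2" "(3 * norm x0 / 4) ^ 2 < norm x ^ 2"
      by (simp_all add: power_strict_mono)
    then have "4 * norm (y - x) ^ 2 < norm x0 ^ 2" "9 * norm x0 ^ 2 < 16 * norm x ^ 2"
      by (simp_all add: power_divide power_mult_distrib)
    then show False using far zero_le_power2[of "norm x0"] by linarith
  qed
qed

section \<open>The pushed forward metric\<close>

lemma jac_hmul_Q8:
  assumes q: "q \<in> Q8" and x: "x \<in> annulus"
  shows "jac (hmul q x) *v hmul q v = jac x *v v"
proof -
  have "((\<lambda>z. Phi (hmul q z)) has_derivative (\<lambda>v. jac (hmul q x) *v hmul q v)) (at x)"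
    using has_derivative_compose[OF bounded_linear_imp_has_derivative[OF bounded_linear_hmul]
        Phi_has_derivative_jac[OF hmul_Q8_annulus[OF q x]]] .
  moreover have "(\<lambda>z. Phi (hmul q z)) = Phi"
    using q by (simp add: fun_eq_iff Phi_def Psi_hmul_Q8)
  ultimately show ?thesis
    using has_derivative_unique[OF _ Phi_has_derivative_jac[OF x]] by metis
qed

lemma jinv_hmul_Q8:
  assumes q: "q \<in> Q8" and x: "x \<in> annulus"
  shows "jinv (hmul q x) *v c = hmul q (jinv x *v c)"
proof -
  have "jinv (hmul q x) *v c = jinv (hmul q x) *v (jac (hmul q x) *v hmul q (jinv x *v c))"
    by (simp add: jac_hmul_Q8[OF q x] matrix_vector_mul_assoc jac_jinv[OF x])
  also have "\<dots> = hmul q (jinv x *v c)"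
    by (simp add: matrix_vector_mul_assoc jinv_jac[OF hmul_Q8_annulus[OF q x]])
  finally show ?thesis .
qed

text \<open>The flat metric, transported by the local inverse of Phi near Phi x.\<close>
definition push_metric_at :: "real^4 \<Rightarrow> real^4^4" where
  "push_metric_at x = transpose (jinv x) ** jinv x"

lemma push_metric_at_form: "v \<bullet> (push_metric_at x *v w) = (jinv x *v v) \<bullet> (jinv x *v w)"
  unfolding push_metric_at_def matrix_vector_mul_assoc[symmetric] transpose_matrix_vector
  by (metis dot_lmul_matrix inner_commute)

lemma push_metric_at_Q8:
  assumes "q \<in> Q8" "x \<in> annulus"
  shows "push_metric_at (hmul q x) = push_metric_at x"
proof -
  have "v \<bullet> (push_metric_at (hmul q x) *v w) = v \<bullet> (push_metric_at x *v w)" for v w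
    unfolding push_metric_at_form jinv_hmul_Q8[OF assms] inner_hmul sqnorm_Q8[OF assms(1)] by simp
  then show ?thesis by (metis matrix_eq vector_eq_ldot)
qed

definition pushed_metric :: "real^4 \<Rightarrow> real^4^4" where
  "pushed_metric y = push_metric_at (SOME x. x \<in> annulus \<and> Phi x = y)"

lemma pushed_metric_Phi:
  assumes x: "x \<in> annulus"
  shows "pushed_metric (Phi x) = push_metric_at x"
proof -
  define x' where "x' = (SOME x'. x' \<in> annulus \<and> Phi x' = Phi x)"
  have "x' \<in> annulus \<and> Phi x' = Phi x"
    unfolding x'_def by (rule someI[of _ x]) (simp add: x)
  then obtain q where "q \<in> Q8" "x' = hmul q x" using Phi_eq_iff[OF x] by metis
  then show ?thesis by (simp add: pushed_metric_def x'_def[symmetric] push_metric_at_Q8 x)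
qed

lemma smooth_fun_push_metric_at: "smooth_fun annulus (\<lambda>x. push_metric_at x $ i $ j)"
proof -
  have "push_metric_at x $ i $ j = (\<Sum>k\<in>UNIV. jinv x $ k $ i * jinv x $ k $ j)" for x
    by (simp add: push_metric_at_def matrix_matrix_mult_def)
  moreover have "smooth_fun annulus (\<lambda>x. \<Sum>k\<in>UNIV. jinv x $ k $ i * jinv x $ k $ j)"
    by (intro smooth_fun_sum[OF open_annulus] smooth_fun_mult[OF open_annulus] smooth_fun_jinv) auto
  ultimately show ?thesis by simp
qed

lemma has_derivative_inv_into_Phi:
  assumes S: "open S" "S \<subseteq> annulus" "inj_on Phi S" and z: "z \<in> Phi ` S"
  shows "(inv_into S Phi has_derivative (\<lambda>v. jinv (inv_into S Phi z) *v v)) (at z)"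
proof -
  let ?x = "inv_into S Phi z"
  have x: "?x \<in> S" and Phi_x: "Phi ?x = z" using z by (auto simp: inv_into_into f_inv_into_f)
  have "(inv_into S Phi has_derivative (\<lambda>v. jinv ?x *v v)) (at (Phi ?x))"
    using x S by (intro has_derivative_inverse_strong[OF S(1) x continuous_on_Phi[OF S(2)] _
        Phi_has_derivative_jac jac_comp_jinv]) auto
  then show ?thesis unfolding Phi_x .
qed

lemma smooth_fun_push_metric_at_inv_into:
  assumes S: "open S" "S \<subseteq> annulus" "inj_on Phi S"
  shows "smooth_fun (Phi ` S) (\<lambda>z. push_metric_at (inv_into S Phi z) $ i $ j)"
proof (rule smooth_fun_compose[OF open_Phi_image[OF S(1,2)] S(1), where G = "inv_into S Phi"
      and G' = "\<lambda>z v. jinv (inv_into S Phi z) *v v" and m = "\<lambda>k b x. (jinv x *v b) \<bullet> k"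
      and h = "\<lambda>x. push_metric_at x $ i $ j"])
  show "inv_into S Phi ` Phi ` S \<subseteq> S" by (auto simp: inv_into_into)
  show "(inv_into S Phi has_derivative (\<lambda>v. jinv (inv_into S Phi z) *v v)) (at z)"
    if "z \<in> Phi ` S" for z
    by (rule has_derivative_inv_into_Phi[OF S that])
  show "smooth_fun S (\<lambda>x. (jinv x *v b) \<bullet> k)" if kb: "k \<in> Basis" "b \<in> Basis" for k b
  proof -
    obtain a c where "k = axis a 1" "b = axis c 1" using kb by (auto simp: Basis_vec_def)
    then have "(\<lambda>x. (jinv x *v b) \<bullet> k) = (\<lambda>x. jinv x $ a $ c)"
      by (simp add: inner_axis matrix_vector_mult_basis column_def)
    then show ?thesis using smooth_fun_subset[OF smooth_fun_jinv S(2)] by simp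
  qed
  show "smooth_fun S (\<lambda>x. push_metric_at x $ i $ j)"
    using smooth_fun_subset[OF smooth_fun_push_metric_at S(2)] .
qed simp

lemma smooth_fun_pushed_metric: "smooth_fun (Phi ` annulus) (\<lambda>y. pushed_metric y $ i $ j)"
proof (rule smooth_fun_local)
  fix y assume "y \<in> Phi ` annulus"
  then obtain x0 where x0: "x0 \<in> annulus" "y = Phi x0" by blast
  define S where "S = ball x0 (norm x0 / 4) \<inter> annulus"
  have S: "open S" "S \<subseteq> annulus" "inj_on Phi S"
    using open_annulus inj_on_Phi_ball[OF x0(1)] by (auto simp: S_def)
  have "0 < norm x0" using annulus_sqnorm_nonzero[OF x0(1)] by (auto simp: sqnorm_eq_norm_power2)
  then have "x0 \<in> S" using x0(1) by (simp add: S_def)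
  have "pushed_metric z $ i $ j = push_metric_at (inv_into S Phi z) $ i $ j"
    if "z \<in> Phi ` S" for z
  proof -
    have "inv_into S Phi z \<in> annulus" "Phi (inv_into S Phi z) = z"
      using that S(2) by (auto simp: inv_into_into f_inv_into_f)
    then show ?thesis using pushed_metric_Phi by metis
  qed
  then have "smooth_fun (Phi ` S) (\<lambda>z. pushed_metric z $ i $ j)"
    by (rule smooth_fun_cong[OF open_Phi_image[OF S(1,2)] smooth_fun_push_metric_at_inv_into[OF S]])
  then show "\<exists>W. open W \<and> y \<in> W \<and> W \<subseteq> Phi ` annulus \<and> smooth_fun W (\<lambda>y. pushed_metric y $ i $ j)"
    using open_Phi_image[OF S(1,2)] x0 \<open>x0 \<in> S\<close> S(2) by blast
qed

lemma riem_metric4_pushed_metric: "riem_metric4 (Phi ` annulus) pushed_metric"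
  unfolding riem_metric4_def
proof (intro conjI allI ballI impI smooth_fun_pushed_metric)
  fix y assume "y \<in> Phi ` annulus"
  then obtain x where x: "x \<in> annulus" "y = Phi x" by blast
  show "transpose (pushed_metric y) = pushed_metric y"
    by (simp add: x pushed_metric_Phi push_metric_at_def matrix_transpose_mul)
  fix v :: "real^4" assume "v \<noteq> 0"
  moreover have "jac x *v (jinv x *v v) = v"
    by (simp add: matrix_vector_mul_assoc jac_jinv[OF x(1)])
  ultimately have "jinv x *v v \<noteq> 0" by auto
  then show "v \<bullet> (pushed_metric y *v v) > 0"
    by (simp add: x pushed_metric_Phi[OF x(1)] push_metric_at_form)
qed

lemma pushed_metric_isometry:
  assumes "x \<in> annulus"
  shows "metric_apply (pushed_metric (Phi x)) (frechet_derivative Phi (at x) v)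
      (frechet_derivative Phi (at x) w) = v \<bullet> w"
proof -
  have "metric_apply (pushed_metric (Phi x)) (frechet_derivative Phi (at x) v)
      (frechet_derivative Phi (at x) w) = (jinv x *v (jac x *v v)) \<bullet> (jinv x *v (jac x *v w))"
    unfolding metric_apply_def pushed_metric_Phi[OF assms] frechet_derivative_Phi[OF assms]
    by (rule push_metric_at_form)
  also have "\<dots> = v \<bullet> w" by (simp add: matrix_vector_mul_assoc jinv_jac[OF assms])
  finally show ?thesis .
qed

theorem proposition2p3:
  shows "\<exists>(U :: (real^4) set) g K c \<Phi>.
     open U \<and> riem_metric4 U g \<and> compact K \<and> K \<subseteq> U \<and> c > 0 \<and>
     smooth_map4 {x. norm x > exp 200} \<Phi> \<and>
     \<Phi> ` {x. norm x > exp 200} = U - K \<and>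
     (\<forall>x\<in>{x. norm x > exp 200}. \<forall>y\<in>{x. norm x > exp 200}.
         \<Phi> x = \<Phi> y \<longleftrightarrow> (\<exists>q\<in>Q8. y = hmul q x)) \<and>
     (\<forall>x\<in>{x. norm x > exp 200}. \<forall>v w.
         metric_apply (g (\<Phi> x)) (frechet_derivative \<Phi> (at x) v) (frechet_derivative \<Phi> (at x) w)
           = cone_metric c x v w)"
  unfolding annulus_def[symmetric]
proof (intro exI conjI)
  show "open (Phi ` annulus)" by (rule open_Phi_image[OF open_annulus subset_refl])
  show "riem_metric4 (Phi ` annulus) pushed_metric" by (rule riem_metric4_pushed_metric)
  show "compact ({} :: (real^4) set)" "{} \<subseteq> Phi ` annulus" "(1::real) > 0" by simp_all
  show "smooth_map4 annulus Phi" unfolding smooth_map4_def using smooth_fun_Phi by blast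
  show "Phi ` annulus = Phi ` annulus - {}" by simp
  show "\<forall>x\<in>annulus. \<forall>y\<in>annulus. Phi x = Phi y \<longleftrightarrow> (\<exists>q\<in>Q8. y = hmul q x)"
    using Phi_eq_iff by blast
  show "\<forall>x\<in>annulus. \<forall>v w. metric_apply (pushed_metric (Phi x)) (frechet_derivative Phi (at x) v)
      (frechet_derivative Phi (at x) w) = cone_metric 1 x v w"
    by (simp add: pushed_metric_isometry cone_metric_def)
qed

end
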